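(* Let $G$ be a connected $m$-uniform hypergraph on $n$ vertices with matching number $\mu(G)$, having more than one edge. Then $s(G)\le m^{n-\mu(G)-2}$ and $\gamma(G)\le(n-\mu(G)-2)\mathrm{cl}(m)$.
   Context: A matching is a set of pairwise disjoint edges; $\mu(G)$ is the maximum size of a matching. Adjacency tensor $\mathcal{A}(G)$ (vertices $v_1,\dots,v_n$): $a_{i_1\cdots i_m}=\frac1{(m-1)!}$ if $\{v_{i_1},\dots,v_{i_m}\}$ is an edge, else $0$. For a tensor $\mathcal{A}$: eigenvectors $\mathcal{A}x^{m-1}=\lambda x^{[m-1]}$, $x\ne0$, $(\mathcal{A}x^{m-1})_i=\sum a_{ii_2\cdots i_m}x_{i_2}\cdots x_{i_m}$; $\rho(\mathcal{A})$ spectral radius. Stabilizing index $s(\mathcal{A})$: number of invertible diagonal $D$ with $d_{11}=1$ and $\mathcal{A}=D^{-(m-1)}\mathcal{A}D$, $(D^{-(m-1)}\mathcal{A}D)_{i_1\cdots i_m}=d_{i_1}^{-(m-1)}a_{i_1\cdots i_m}d_{i_2}\cdots d_{i_m}$. Stabilizing dimension $\gamma(\mathcal{A})$: composition length of the $\mathbb{Z}_m$-module of eigenvectors $y$ for $\rho(\mathcal{A})$ normalized by $y_1=1$, with operation $y\circ\hat y=D_yD_{\hat y}v_p$, $D_y=\mathrm{diag}(y_i/|y_i|)$, $v_p$ the positive one. $s(G)=s(\mathcal{A}(G))$, $\gamma(G)=\gamma(\mathcal{A}(G))$. $\mathrm{cl}(m)$: number of prime factors of $m$ with multiplicity. *)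

theory Defs
  imports Complex_Main "HOL-Computational_Algebra.Primes" "HOL-Library.FuncSet"
begin

text \<open>A hypergraph is a set E of edges, each a subset of the vertex set {..<n}.
  Vertex v_1 of the paper is vertex 0 here.\<close>

definition hg_uniform :: "nat \<Rightarrow> nat \<Rightarrow> nat set set \<Rightarrow> bool" where
  "hg_uniform n m E \<longleftrightarrow> (\<forall>e\<in>E. e \<subseteq> {..<n} \<and> card e = m)"

definition hg_adj :: "nat set set \<Rightarrow> nat \<Rightarrow> nat \<Rightarrow> bool" where
  "hg_adj E x y \<longleftrightarrow> (\<exists>e\<in>E. x \<in> e \<and> y \<in> e)"

definition hg_connected :: "nat \<Rightarrow> nat set set \<Rightarrow> bool" where
  "hg_connected n E \<longleftrightarrow> (\<forall>x<n. \<forall>y<n. (hg_adj E)\<^sup>*\<^sup>* x y)"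

definition matching_number :: "nat set set \<Rightarrow> nat" where
  "matching_number E = Max {card M | M. M \<subseteq> E \<and> pairwise disjnt M}"

text \<open>A tensor is a function on index lists; only lists of length m with entries
  in {..<n} are relevant.\<close>

type_synonym tensor = "nat list \<Rightarrow> complex"

definition index_lists :: "nat \<Rightarrow> nat \<Rightarrow> nat list set" where
  "index_lists k n = {js. length js = k \<and> set js \<subseteq> {..<n}}"

definition adj_tensor :: "nat \<Rightarrow> nat set set \<Rightarrow> tensor" where
  "adj_tensor m E = (\<lambda>is. if set is \<in> E then 1 / of_nat (fact (m - 1)) else 0)"

definition tensor_apply :: "nat \<Rightarrow> nat \<Rightarrow> tensor \<Rightarrow> (nat \<Rightarrow> complex) \<Rightarrow> nat \<Rightarrow> complex" where
  "tensor_apply m n A x i = (\<Sum>js\<in>index_lists (m - 1) n. A (i # js) * prod_list (map x js))"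

definition eigenpair :: "nat \<Rightarrow> nat \<Rightarrow> tensor \<Rightarrow> complex \<Rightarrow> (nat \<Rightarrow> complex) \<Rightarrow> bool" where
  "eigenpair m n A lam x \<longleftrightarrow> (\<exists>i<n. x i \<noteq> 0) \<and>
     (\<forall>i<n. tensor_apply m n A x i = lam * x i ^ (m - 1))"

definition tensor_spectral_radius :: "nat \<Rightarrow> nat \<Rightarrow> tensor \<Rightarrow> real" where
  "tensor_spectral_radius m n A = Sup {cmod lam | lam. \<exists>x. eigenpair m n A lam x}"

text \<open>Invertible diagonal matrices D are represented by their diagonals d on {..<n}.
  The condition A = D^{-(m-1)} A D, entrywise.\<close>
definition stabilizing_index :: "nat \<Rightarrow> nat \<Rightarrow> tensor \<Rightarrow> nat" where
  "stabilizing_index m n A = card {d \<in> extensional {..<n}. d 0 = 1 \<and> (\<forall>i<n. d i \<noteq> 0) \<and>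
     (\<forall>i<n. \<forall>js\<in>index_lists (m - 1) n.
        A (i # js) = inverse (d i ^ (m - 1)) * A (i # js) * prod_list (map d js))}"

definition rho_eigvecs :: "nat \<Rightarrow> nat \<Rightarrow> tensor \<Rightarrow> (nat \<Rightarrow> complex) set" where
  "rho_eigvecs m n A = {y \<in> extensional {..<n}.
      eigenpair m n A (complex_of_real (tensor_spectral_radius m n A)) y \<and> y 0 = 1}"

definition perron_vec :: "nat \<Rightarrow> nat \<Rightarrow> tensor \<Rightarrow> nat \<Rightarrow> complex" where
  "perron_vec m n A = (THE v. v \<in> rho_eigvecs m n A \<and> (\<forall>i<n. Im (v i) = 0 \<and> Re (v i) > 0))"

text \<open>y o y' = D_y D_y' v_p, where D_y = diag(y_i/|y_i|) = diag(sgn y_i).\<close>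
definition eig_op :: "nat \<Rightarrow> nat \<Rightarrow> tensor \<Rightarrow> (nat \<Rightarrow> complex) \<Rightarrow> (nat \<Rightarrow> complex) \<Rightarrow> nat \<Rightarrow> complex" where
  "eig_op m n A y y' = restrict (\<lambda>i. sgn (y i) * sgn (y' i) * perron_vec m n A i) {..<n}"

text \<open>Submodules of a Z_m-module given by carrier Y, addition op and zero e;
  the scalar k acts as k-fold addition.\<close>
definition zm_submodule :: "nat \<Rightarrow> 'a set \<Rightarrow> ('a \<Rightarrow> 'a \<Rightarrow> 'a) \<Rightarrow> 'a \<Rightarrow> 'a set \<Rightarrow> bool" where
  "zm_submodule m Y op e S \<longleftrightarrow> S \<subseteq> Y \<and> e \<in> S \<and> (\<forall>x\<in>S. \<forall>y\<in>S. op x y \<in> S) \<and>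
     (\<forall>x\<in>S. \<forall>k<m. (op x ^^ k) e \<in> S)"

definition zm_composition_series :: "nat \<Rightarrow> 'a set \<Rightarrow> ('a \<Rightarrow> 'a \<Rightarrow> 'a) \<Rightarrow> 'a \<Rightarrow> (nat \<Rightarrow> 'a set) \<Rightarrow> nat \<Rightarrow> bool" where
  "zm_composition_series m Y op e S k \<longleftrightarrow> S 0 = {e} \<and> S k = Y \<and>
     (\<forall>i\<le>k. zm_submodule m Y op e (S i)) \<and>
     (\<forall>i<k. S i \<subset> S (Suc i) \<and>
        \<not> (\<exists>T. zm_submodule m Y op e T \<and> S i \<subset> T \<and> T \<subset> S (Suc i)))"

text \<open>Composition length (well defined by Jordan-Hoelder).\<close>
definition zm_composition_length :: "nat \<Rightarrow> 'a set \<Rightarrow> ('a \<Rightarrow> 'a \<Rightarrow> 'a) \<Rightarrow> 'a \<Rightarrow> nat" where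
  "zm_composition_length m Y op e = (LEAST k. \<exists>S. zm_composition_series m Y op e S k)"

definition stabilizing_dimension :: "nat \<Rightarrow> nat \<Rightarrow> tensor \<Rightarrow> nat" where
  "stabilizing_dimension m n A =
     zm_composition_length m (rho_eigvecs m n A) (eig_op m n A) (perron_vec m n A)"

definition cl :: "nat \<Rightarrow> nat" where
  "cl m = size (prime_factorization m)"

end

(* A diagonal matrix D stabilizes the adjacency tensor iff d_i^(m-1) is the product of the d_j
   over e - {i} for every edge e through i.  By connectivity such d (normalised by d_1 = 1) are
   m-th roots of unity whose product over every edge is 1, and they form a group.  Choosing one
   pivot in each edge of a maximum matching, one further vertex and v_1, the edge equations
   determine d at these mu(G) + 2 vertices from its values elsewhere, so the group embeds into the
   m-th roots of unity indexed by the remaining n - mu(G) - 2 vertices and its order divides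
   m^(n - mu(G) - 2).
   The positive Perron vector v, obtained by maximising the sum over edges of the products of the
   coordinates on the nonnegative unit l^m-sphere, shows that the spectral radius is attained
   there; equality in the triangle inequality then forces every normalised eigenvector of the
   spectral radius to be D v for a stabilizer D, with the module operation matching the
   product of the D's.  Hence every composition series has at most as many steps as the group
   order has prime factors. *)

theory Submission
  imports Defs "HOL-Analysis.Function_Topology" "HOL-Analysis.Complex_Transcendental"
    "HOL-Algebra.Coset" "HOL-Combinatorics.Multiset_Permutations"
begin

section \<open>Groups of roots of unity and composition length\<close>

definition pointwise_mult :: "'i set \<Rightarrow> ('i \<Rightarrow> 'a::comm_monoid_mult) \<Rightarrow> ('i \<Rightarrow> 'a) \<Rightarrow> 'i \<Rightarrow> 'a" where
  "pointwise_mult I a b = (\<lambda>i\<in>I. a i * b i)"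

definition pointwise_one :: "'i set \<Rightarrow> 'i \<Rightarrow> 'a::comm_monoid_mult" where
  "pointwise_one I = (\<lambda>i\<in>I. 1)"

definition pointwise_monoid :: "'i set \<Rightarrow> ('i \<Rightarrow> 'a::comm_monoid_mult) set \<Rightarrow> ('i \<Rightarrow> 'a) monoid" where
  "pointwise_monoid I C = \<lparr>carrier = C, mult = pointwise_mult I, one = pointwise_one I\<rparr>"

definition root_of_unity_group :: "nat \<Rightarrow> 'i set \<Rightarrow> ('i \<Rightarrow> 'a::comm_monoid_mult) set \<Rightarrow> bool" where
  "root_of_unity_group m I C \<longleftrightarrow> C \<subseteq> extensional I \<and> (\<forall>x\<in>C. \<forall>i\<in>I. x i ^ m = 1) \<and>
     pointwise_one I \<in> C \<and> (\<forall>a\<in>C. \<forall>b\<in>C. pointwise_mult I a b \<in> C)"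

lemma root_of_unity_group_power_closed:
  assumes C: "root_of_unity_group m I C" and a: "a \<in> C"
  shows "(\<lambda>i\<in>I. a i ^ k) \<in> C"
proof (induction k)
  case 0
  have "(\<lambda>i\<in>I. a i ^ 0) = pointwise_one I" by (simp add: pointwise_one_def)
  with C show ?case unfolding root_of_unity_group_def by simp
next
  case (Suc k)
  have "(\<lambda>i\<in>I. a i ^ Suc k) = pointwise_mult I a (\<lambda>i\<in>I. a i ^ k)"
    unfolding pointwise_mult_def by auto
  then show ?case using Suc a C unfolding root_of_unity_group_def by (simp only:)
qed

lemma root_of_unity_group_inverse:
  assumes C: "root_of_unity_group m I C" and a: "a \<in> C" and m: "m \<ge> 1"
  shows "pointwise_mult I (\<lambda>i\<in>I. a i ^ (m - 1)) a = pointwise_one I"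
proof -
  have "a i ^ (m - 1) * a i = 1" if "i \<in> I" for i
    using C a that m unfolding root_of_unity_group_def
    by (metis power_minus_mult zero_less_one order_less_le_trans)
  then show ?thesis unfolding pointwise_mult_def pointwise_one_def by auto
qed

lemma root_of_unity_group_is_group:
  assumes C: "root_of_unity_group m I C" and m: "m \<ge> 1"
  shows "group (pointwise_monoid I C)"
proof (rule groupI)
  have ext: "\<And>x. x \<in> C \<Longrightarrow> x \<in> extensional I" using C unfolding root_of_unity_group_def by auto
  show "\<And>x y. x \<in> carrier (pointwise_monoid I C) \<Longrightarrow> y \<in> carrier (pointwise_monoid I C) \<Longrightarrow>
      x \<otimes>\<^bsub>pointwise_monoid I C\<^esub> y \<in> carrier (pointwise_monoid I C)"
    "\<one>\<^bsub>pointwise_monoid I C\<^esub> \<in> carrier (pointwise_monoid I C)"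
    using C unfolding root_of_unity_group_def pointwise_monoid_def by auto
  show "\<And>x y z. x \<in> carrier (pointwise_monoid I C) \<Longrightarrow> y \<in> carrier (pointwise_monoid I C) \<Longrightarrow>
      z \<in> carrier (pointwise_monoid I C) \<Longrightarrow>
      x \<otimes>\<^bsub>pointwise_monoid I C\<^esub> y \<otimes>\<^bsub>pointwise_monoid I C\<^esub> z =
      x \<otimes>\<^bsub>pointwise_monoid I C\<^esub> (y \<otimes>\<^bsub>pointwise_monoid I C\<^esub> z)"
    unfolding pointwise_monoid_def pointwise_mult_def by (auto simp: fun_eq_iff mult.assoc)
  show "\<And>x. x \<in> carrier (pointwise_monoid I C) \<Longrightarrow> \<one>\<^bsub>pointwise_monoid I C\<^esub> \<otimes>\<^bsub>pointwise_monoid I C\<^esub> x = x"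
    unfolding pointwise_monoid_def pointwise_mult_def pointwise_one_def
    using ext by (force simp: fun_eq_iff extensional_def)
  show "\<And>x. x \<in> carrier (pointwise_monoid I C) \<Longrightarrow>
      \<exists>y\<in>carrier (pointwise_monoid I C). y \<otimes>\<^bsub>pointwise_monoid I C\<^esub> x = \<one>\<^bsub>pointwise_monoid I C\<^esub>"
    using root_of_unity_group_power_closed[OF C] root_of_unity_group_inverse[OF C _ m]
    unfolding pointwise_monoid_def by auto
qed

lemma root_of_unity_group_card_dvd:
  assumes H: "root_of_unity_group m I H" and C: "root_of_unity_group m I C"
    and sub: "H \<subseteq> C" and fin: "finite C" and m: "m \<ge> 1"
  shows "card H dvd card C"
proof -
  interpret G: group "pointwise_monoid I C" by (rule root_of_unity_group_is_group[OF C m])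
  have "subgroup H (pointwise_monoid I C)"
  proof (rule G.subgroupI)
    show "H \<subseteq> carrier (pointwise_monoid I C)" using sub unfolding pointwise_monoid_def by simp
    show "H \<noteq> {}" using H unfolding root_of_unity_group_def by auto
    show "\<And>a b. a \<in> H \<Longrightarrow> b \<in> H \<Longrightarrow> a \<otimes>\<^bsub>pointwise_monoid I C\<^esub> b \<in> H"
      using H unfolding root_of_unity_group_def pointwise_monoid_def by auto
    fix a assume a: "a \<in> H"
    have "inv\<^bsub>pointwise_monoid I C\<^esub> a = (\<lambda>i\<in>I. a i ^ (m - 1))"
      by (rule G.inv_equality)
        (use root_of_unity_group_inverse[OF H a m] root_of_unity_group_power_closed[OF H a] a sub in
          \<open>auto simp: pointwise_monoid_def\<close>)
    then show "inv\<^bsub>pointwise_monoid I C\<^esub> a \<in> H" using root_of_unity_group_power_closed[OF H a] by simp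
  qed
  then have "card (rcosets\<^bsub>pointwise_monoid I C\<^esub> H) * card H = card C"
    using G.lagrange_finite fin unfolding order_def pointwise_monoid_def by simp
  then show ?thesis by (metis dvd_triv_right)
qed

lemma root_of_unity_group_PiE: "root_of_unity_group m I (PiE I (\<lambda>_. {z. z ^ m = 1}))"
  unfolding root_of_unity_group_def pointwise_one_def pointwise_mult_def
  by (auto simp: PiE_def Pi_def power_mult_distrib)

lemma root_of_unity_group_restrict:
  assumes C: "root_of_unity_group m I C" and W: "W \<subseteq> I"
  shows "root_of_unity_group m W ((\<lambda>x. restrict x W) ` C)"
  unfolding root_of_unity_group_def
proof (intro conjI ballI)
  have one: "pointwise_one W = restrict (pointwise_one I) W"
    and mult: "pointwise_mult W (restrict a W) (restrict b W) = restrict (pointwise_mult I a b) W"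
    for a b :: "'a \<Rightarrow> 'b" using W unfolding pointwise_one_def pointwise_mult_def by (auto simp: fun_eq_iff)
  show "(\<lambda>x. restrict x W) ` C \<subseteq> extensional W" by auto
  show "x i ^ m = 1" if "x \<in> (\<lambda>x. restrict x W) ` C" "i \<in> W" for x i
    using that W C unfolding root_of_unity_group_def by auto
  show "pointwise_one W \<in> (\<lambda>x. restrict x W) ` C"
    unfolding one using C unfolding root_of_unity_group_def by blast
  fix a b assume "a \<in> (\<lambda>x. restrict x W) ` C" "b \<in> (\<lambda>x. restrict x W) ` C"
  then obtain a' b' where ab: "a = restrict a' W" "b = restrict b' W" "a' \<in> C" "b' \<in> C" by blast
  have "pointwise_mult W a b = restrict (pointwise_mult I a' b') W" unfolding ab mult ..
  moreover have "pointwise_mult I a' b' \<in> C" using C ab(3,4) unfolding root_of_unity_group_def by blast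
  ultimately show "pointwise_mult W a b \<in> (\<lambda>x. restrict x W) ` C" by (rule image_eqI)
qed

lemma size_prime_factorization_mono:
  assumes "(a::nat) dvd b" "b \<noteq> 0"
  shows "size (prime_factorization a) \<le> size (prime_factorization b)"
  using assms by (intro size_mset_mono) (auto simp: prime_factorization_subset_iff_dvd)

lemma size_prime_factorization_less:
  assumes "(a::nat) \<noteq> 0" "a dvd b" "a < b"
  shows "size (prime_factorization a) < size (prime_factorization b)"
proof -
  obtain c where c: "b = a * c" using assms(2) by auto
  with assms have "c \<noteq> 0" "c \<noteq> 1" by auto
  then have "prime_factorization c \<noteq> {#}" by (simp add: prime_factorization_empty_iff)
  moreover have "prime_factorization b = prime_factorization a + prime_factorization c"
    using c assms(1) \<open>c \<noteq> 0\<close> by (simp add: prime_factorization_mult)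
  ultimately show ?thesis by (simp add: nonempty_has_size)
qed

lemma size_prime_factorization_power:
  assumes "(m::nat) \<noteq> 0"
  shows "size (prime_factorization (m ^ k)) = k * size (prime_factorization m)"
proof (induction k)
  case (Suc k)
  have "prime_factorization (m ^ Suc k) = prime_factorization m + prime_factorization (m ^ k)"
    using assms by (simp add: prime_factorization_mult)
  then show ?case using Suc by simp
qed simp

definition zm_submodule_chain :: "nat \<Rightarrow> 'a set \<Rightarrow> ('a \<Rightarrow> 'a \<Rightarrow> 'a) \<Rightarrow> 'a \<Rightarrow> nat \<Rightarrow> (nat \<Rightarrow> 'a set) \<Rightarrow> bool" where
  "zm_submodule_chain m Y op e k S \<longleftrightarrow> S 0 = {e} \<and> S k = Y \<and>
     (\<forall>i\<le>k. zm_submodule m Y op e (S i)) \<and> (\<forall>i<k. S i \<subset> S (Suc i))"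

text \<open>Along the chain each cardinality properly divides the next, so every step adds a prime factor.\<close>
lemma zm_submodule_chain_length_le:
  assumes dvd: "\<And>S T. zm_submodule m Y op e S \<Longrightarrow> zm_submodule m Y op e T \<Longrightarrow> S \<subseteq> T \<Longrightarrow> card S dvd card T"
    and fin: "finite Y" and chain: "zm_submodule_chain m Y op e k S"
  shows "k \<le> size (prime_factorization (card Y))"
proof -
  have sub: "\<And>i. i \<le> k \<Longrightarrow> zm_submodule m Y op e (S i)"
    and strict: "\<And>i. i < k \<Longrightarrow> S i \<subset> S (Suc i)"
    using chain unfolding zm_submodule_chain_def by auto
  have "j \<le> size (prime_factorization (card (S j)))" if "j \<le> k" for j
    using that
  proof (induction j)
    case (Suc j)
    then have j: "j < k" "j \<le> k" by simp_all
    have fin_S: "finite (S (Suc j))"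
      using sub[OF Suc.prems] fin unfolding zm_submodule_def by (auto intro: finite_subset)
    have "e \<in> S j" using sub[OF j(2)] unfolding zm_submodule_def by blast
    moreover have "finite (S j)" using fin_S strict[OF j(1)] by (auto intro: finite_subset)
    ultimately have "card (S j) \<noteq> 0" by auto
    moreover have "card (S j) dvd card (S (Suc j))"
      using dvd[OF sub[OF j(2)] sub[OF Suc.prems]] strict[OF j(1)] by blast
    moreover have "card (S j) < card (S (Suc j))"
      using psubset_card_mono[OF fin_S strict[OF j(1)]] .
    ultimately have "size (prime_factorization (card (S j))) < size (prime_factorization (card (S (Suc j))))"
      by (rule size_prime_factorization_less)
    with Suc.IH[OF j(2)] show ?case by simp
  qed simp
  from this[of k] chain show ?thesis unfolding zm_submodule_chain_def by simp
qed

lemma maximal_zm_submodule_chain_is_composition_series: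
  assumes chain: "zm_submodule_chain m Y op e k S"
    and maximal: "\<And>k' S'. zm_submodule_chain m Y op e k' S' \<Longrightarrow> k' \<le> k"
  shows "zm_composition_series m Y op e S k"
  unfolding zm_composition_series_def
proof (intro conjI allI impI)
  show "S 0 = {e}" "S k = Y" "\<And>i. i \<le> k \<Longrightarrow> zm_submodule m Y op e (S i)"
    "\<And>i. i < k \<Longrightarrow> S i \<subset> S (Suc i)"
    using chain unfolding zm_submodule_chain_def by auto
  fix i assume i: "i < k"
  show "\<not> (\<exists>T. zm_submodule m Y op e T \<and> S i \<subset> T \<and> T \<subset> S (Suc i))"
  proof
    assume "\<exists>T. zm_submodule m Y op e T \<and> S i \<subset> T \<and> T \<subset> S (Suc i)"
    then obtain T where T: "zm_submodule m Y op e T" "S i \<subset> T" "T \<subset> S (Suc i)" by auto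
    define S' where "S' = (\<lambda>j. if j \<le> i then S j else if j = Suc i then T else S (j - 1))"
    have "zm_submodule_chain m Y op e (Suc k) S'"
      unfolding zm_submodule_chain_def
    proof (intro conjI allI impI)
      show "S' 0 = {e}" "S' (Suc k) = Y" "\<And>j. j \<le> Suc k \<Longrightarrow> zm_submodule m Y op e (S' j)"
        using chain T(1) i unfolding S'_def zm_submodule_chain_def by auto
      fix j assume j: "j < Suc k"
      consider "j < i" | "j = i" | "j = Suc i" | "j > Suc i" by linarith
      then show "S' j \<subset> S' (Suc j)"
      proof cases
        case 4
        then have "j - 1 < k" "Suc (j - 1) = j" using j by auto
        then have "S (j - 1) \<subset> S j" using chain unfolding zm_submodule_chain_def by metis
        with 4 show ?thesis unfolding S'_def by simp
      qed (use chain i T in \<open>auto simp: S'_def zm_submodule_chain_def\<close>)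
    qed
    with maximal show False by fastforce
  qed
qed

lemma zm_composition_length_le:
  assumes e: "e \<in> Y" and closed: "\<forall>x\<in>Y. \<forall>y\<in>Y. op x y \<in> Y" and ee: "op e e = e"
    and fin: "finite Y"
    and dvd: "\<And>S T. zm_submodule m Y op e S \<Longrightarrow> zm_submodule m Y op e T \<Longrightarrow> S \<subseteq> T \<Longrightarrow> card S dvd card T"
  shows "zm_composition_length m Y op e \<le> size (prime_factorization (card Y))"
proof -
  let ?B = "size (prime_factorization (card Y))"
  let ?chain = "\<lambda>k. \<exists>S. zm_submodule_chain m Y op e k S"
  have "zm_submodule m Y op e Y"
  proof -
    have "(op x ^^ k) e \<in> Y" if "x \<in> Y" for x k by (induction k) (use that e closed in auto)
    then show ?thesis unfolding zm_submodule_def using e closed by auto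
  qed
  moreover have "zm_submodule m Y op e {e}"
  proof -
    have "(op e ^^ k) e = e" for k by (induction k) (use ee in auto)
    then show ?thesis unfolding zm_submodule_def using e ee by auto
  qed
  ultimately have "?chain (if Y = {e} then 0 else 1)"
    using e unfolding zm_submodule_chain_def
    by (intro exI[of _ "\<lambda>i. if i = 0 then {e} else Y"]) auto
  moreover have bound: "\<And>k. ?chain k \<Longrightarrow> k \<le> ?B"
    using zm_submodule_chain_length_le[OF dvd fin] by blast
  ultimately have "?chain (GREATEST k. ?chain k)" by (rule GreatestI_nat)
  then obtain S where S: "zm_submodule_chain m Y op e (GREATEST k. ?chain k) S" by blast
  have "k \<le> (GREATEST k. ?chain k)" if "zm_submodule_chain m Y op e k S'" for k S'
    using that bound by (intro Greatest_le_nat[where b = ?B]) auto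
  with S have "zm_composition_series m Y op e S (GREATEST k. ?chain k)"
    by (rule maximal_zm_submodule_chain_is_composition_series)
  then have "zm_composition_length m Y op e \<le> (GREATEST k. ?chain k)"
    unfolding zm_composition_length_def by (intro Least_le) auto
  also have "\<dots> \<le> ?B" using S bound by blast
  finally show ?thesis .
qed

text \<open>The homomorphism sends submodules to subgroups, so Lagrange's theorem gives the divisibility.\<close>
lemma zm_composition_length_le_by_hom:
  fixes \<phi> :: "'a \<Rightarrow> 'i \<Rightarrow> 'b::comm_monoid_mult"
  assumes e: "e \<in> Y" and closed: "\<forall>x\<in>Y. \<forall>y\<in>Y. op x y \<in> Y" and ee: "op e e = e"
    and fin: "finite Y" and m: "m \<ge> 1"
    and inj: "inj_on \<phi> Y" and G: "root_of_unity_group m I (\<phi> ` Y)" and \<phi>_e: "\<phi> e = pointwise_one I"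
    and hom: "\<forall>x\<in>Y. \<forall>y\<in>Y. \<phi> (op x y) = pointwise_mult I (\<phi> x) (\<phi> y)"
  shows "zm_composition_length m Y op e \<le> size (prime_factorization (card Y))"
proof (rule zm_composition_length_le[OF e closed ee fin])
  have group: "root_of_unity_group m I (\<phi> ` S)" if "zm_submodule m Y op e S" for S
    unfolding root_of_unity_group_def
  proof (intro conjI ballI)
    from that have S: "S \<subseteq> Y" "e \<in> S" "\<forall>x\<in>S. \<forall>y\<in>S. op x y \<in> S"
      unfolding zm_submodule_def by auto
    show "\<phi> ` S \<subseteq> extensional I" using G S(1) unfolding root_of_unity_group_def by blast
    show "x i ^ m = 1" if "x \<in> \<phi> ` S" "i \<in> I" for x i
      using G S(1) that unfolding root_of_unity_group_def by blast
    show "pointwise_one I \<in> \<phi> ` S" using \<phi>_e S(2) by (metis image_eqI)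
    fix a b assume "a \<in> \<phi> ` S" "b \<in> \<phi> ` S"
    then obtain x y where "x \<in> S" "y \<in> S" "a = \<phi> x" "b = \<phi> y" by blast
    with hom S show "pointwise_mult I a b \<in> \<phi> ` S" by (metis image_eqI subsetD)
  qed
  fix S T assume S: "zm_submodule m Y op e S" and T: "zm_submodule m Y op e T" and ST: "S \<subseteq> T"
  have "S \<subseteq> Y" "T \<subseteq> Y" using S T unfolding zm_submodule_def by auto
  moreover have "card (\<phi> ` S) dvd card (\<phi> ` T)"
    using \<open>T \<subseteq> Y\<close> fin ST
    by (intro root_of_unity_group_card_dvd[OF group[OF S] group[OF T] _ _ m]) (auto intro: finite_subset)
  ultimately show "card S dvd card T" using inj by (metis card_image inj_on_subset)
qed

lemma sum_norm_eq_imp_aligned: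
  fixes z :: "'b \<Rightarrow> complex"
  assumes fin: "finite A" and w: "w = (\<Sum>a\<in>A. z a)" and eq: "cmod w = (\<Sum>a\<in>A. cmod (z a))"
    and a: "a \<in> A"
  shows "z a * cnj w = complex_of_real (cmod (z a) * cmod w)"
proof -
  have le: "\<And>a. Re (z a * cnj w) \<le> cmod (z a) * cmod w"
    by (metis complex_Re_le_cmod complex_mod_cnj norm_mult)
  have "(\<Sum>a\<in>A. Re (z a * cnj w)) = Re (w * cnj w)" unfolding w by (simp add: sum_distrib_right)
  also have "\<dots> = cmod w ^ 2" by (simp add: complex_mult_cnj cmod_power2)
  also have "\<dots> = (\<Sum>a\<in>A. cmod (z a) * cmod w)" using eq by (simp add: power2_eq_square sum_distrib_right)
  finally have "(\<Sum>a\<in>A. cmod (z a) * cmod w - Re (z a * cnj w)) = 0" by (simp add: sum_subtractf)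
  moreover have "(\<Sum>a\<in>A. cmod (z a) * cmod w - Re (z a * cnj w)) = 0 \<longleftrightarrow>
      (\<forall>a\<in>A. cmod (z a) * cmod w - Re (z a * cnj w) = 0)"
    by (rule sum_nonneg_eq_0_iff[OF fin]) (use le in simp)
  ultimately have Re: "Re (z a * cnj w) = cmod (z a) * cmod w" using a by simp
  have "cmod (z a * cnj w) ^ 2 = Re (z a * cnj w) ^ 2 + Im (z a * cnj w) ^ 2" by (simp add: cmod_power2)
  then have "Im (z a * cnj w) = 0" using Re by (simp add: norm_mult)
  with Re show ?thesis by (simp add: complex_eq_iff)
qed

lemma prod_le_eq_imp_eq:
  fixes a b :: "'b \<Rightarrow> real"
  assumes fin: "finite A" and ab: "\<forall>j\<in>A. 0 \<le> a j \<and> a j \<le> b j \<and> 0 < b j"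
    and eq: "(\<Prod>j\<in>A. a j) = (\<Prod>j\<in>A. b j)" and j: "j \<in> A"
  shows "a j = b j"
proof (rule ccontr)
  assume "a j \<noteq> b j"
  with ab j have lt: "a j < b j" by force
  have "(\<Prod>j\<in>A. a j) = a j * (\<Prod>i\<in>A - {j}. a i)" using prod.remove[OF fin j] .
  also have "\<dots> \<le> a j * (\<Prod>i\<in>A - {j}. b i)"
    using ab j by (intro mult_left_mono prod_mono) auto
  also have "\<dots> < b j * (\<Prod>i\<in>A - {j}. b i)"
    using lt ab by (intro mult_strict_right_mono prod_pos) auto
  also have "\<dots> = (\<Prod>j\<in>A. b j)" using prod.remove[OF fin j, of b] by simp
  finally show False using eq by simp
qed

lemma unit_power_eq_if_mult_cnj_power_eq_1:
  fixes a b :: complex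
  assumes "cmod a = 1" and "b * cnj a ^ k = 1"
  shows "a ^ k = b"
proof -
  have "a * cnj a = 1" using assms(1) complex_norm_square[of a] by simp
  have "a ^ k = a ^ k * (b * cnj a ^ k)" using assms(2) by simp
  also have "\<dots> = b * (a * cnj a) ^ k" by (simp add: power_mult_distrib ac_simps)
  finally show ?thesis using \<open>a * cnj a = 1\<close> by simp
qed

section \<open>The adjacency tensor and its diagonal stabilizers\<close>

definition adj_apply :: "nat set set \<Rightarrow> (nat \<Rightarrow> 'a::comm_semiring_1) \<Rightarrow> nat \<Rightarrow> 'a" where
  "adj_apply E x i = (\<Sum>e\<in>{e\<in>E. i \<in> e}. \<Prod>j\<in>e - {i}. x j)"

lemma finite_index_lists: "finite (index_lists k n)"
proof -
  have "index_lists k n = {xs. set xs \<subseteq> {..<n} \<and> length xs = k}"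
    unfolding index_lists_def by auto
  thus ?thesis using finite_lists_length_eq[of "{..<n}" k] by simp
qed

lemma hg_uniformD:
  assumes "hg_uniform n m E" "e \<in> E"
  shows "e \<subseteq> {..<n}" "card e = m" "finite e"
  using assms unfolding hg_uniform_def by (auto intro: finite_subset)

lemma hg_uniform_finite: "hg_uniform n m E \<Longrightarrow> finite E"
  unfolding hg_uniform_def by (rule finite_subset[of _ "Pow {..<n}"]) auto

lemma distinct_edge_index_list:
  assumes "hg_uniform n m E" "js \<in> index_lists (m - 1) n" "set (i # js) \<in> E"
  shows "distinct (i # js)"
proof -
  have "card (set (i # js)) = m" using hg_uniformD(2)[OF assms(1,3)] .
  moreover from this have "length (i # js) = m"
    using assms(2) unfolding index_lists_def by (cases m) auto
  ultimately show ?thesis by (intro card_distinct) simp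
qed

lemma edge_index_lists_eq_permutations:
  assumes "hg_uniform n m E" "i < n"
  shows "{js \<in> index_lists (m - 1) n. set (i # js) \<in> E} =
    (\<Union>e\<in>{e\<in>E. i \<in> e}. permutations_of_set (e - {i}))"
proof (intro equalityI subsetI)
  fix js assume "js \<in> {js \<in> index_lists (m - 1) n. set (i # js) \<in> E}"
  then show "js \<in> (\<Union>e\<in>{e\<in>E. i \<in> e}. permutations_of_set (e - {i}))"
    using distinct_edge_index_list[OF assms(1)]
    by (intro UN_I[of "set (i # js)"]) (auto simp: permutations_of_set_def)
next
  fix js assume "js \<in> (\<Union>e\<in>{e\<in>E. i \<in> e}. permutations_of_set (e - {i}))"
  then obtain e where e: "e \<in> E" "i \<in> e" and js: "set js = e - {i}" "distinct js"
    unfolding permutations_of_set_def by auto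
  have "length js = m - 1"
    using hg_uniformD[OF assms(1) e(1)] e(2) js distinct_card[of js] by simp
  with hg_uniformD(1)[OF assms(1) e(1)] e js insert_absorb[OF e(2)]
  show "js \<in> {js \<in> index_lists (m - 1) n. set (i # js) \<in> E}"
    unfolding index_lists_def by auto
qed

text \<open>Each edge through \<open>i\<close> contributes its \<open>(m - 1)!\<close> orderings, cancelling the normalisation
  of the adjacency tensor.\<close>
lemma tensor_apply_adj_tensor:
  assumes H: "hg_uniform n m E" and i: "i < n"
  shows "tensor_apply m n (adj_tensor m E) x i = adj_apply E x i"
proof -
  define c :: complex where "c = 1 / of_nat (fact (m - 1))"
  have perms: "(\<Sum>js\<in>permutations_of_set (e - {i}). c * prod_list (map x js)) = (\<Prod>j\<in>e - {i}. x j)"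
    if e: "e \<in> E" "i \<in> e" for e
  proof -
    have "(\<Sum>js\<in>permutations_of_set (e - {i}). c * prod_list (map x js))
        = of_nat (card (permutations_of_set (e - {i}))) * c * (\<Prod>j\<in>e - {i}. x j)"
      by (simp add: permutations_of_set_def prod.distinct_set_conv_list[symmetric])
    also have "card (permutations_of_set (e - {i})) = fact (m - 1)"
      using hg_uniformD[OF H e(1)] e(2) by simp
    finally show ?thesis by (simp add: c_def)
  qed
  have "tensor_apply m n (adj_tensor m E) x i =
        (\<Sum>js\<in>index_lists (m - 1) n. if set (i # js) \<in> E then c * prod_list (map x js) else 0)"
    unfolding tensor_apply_def adj_tensor_def c_def by (intro sum.cong) auto
  also have "\<dots> = (\<Sum>js\<in>{js \<in> index_lists (m - 1) n. set (i # js) \<in> E}. c * prod_list (map x js))"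
    by (simp add: sum.inter_filter[OF finite_index_lists])
  also have "\<dots> = (\<Sum>e\<in>{e\<in>E. i \<in> e}. \<Sum>js\<in>permutations_of_set (e - {i}). c * prod_list (map x js))"
    unfolding edge_index_lists_eq_permutations[OF H i]
    using hg_uniform_finite[OF H]
    by (intro sum.UNION_disjoint) (simp_all, auto simp: permutations_of_set_def)
  also have "\<dots> = adj_apply E x i"
    unfolding adj_apply_def by (intro sum.cong refl perms) auto
  finally show ?thesis .
qed

definition diag_stabilizes :: "nat set set \<Rightarrow> nat \<Rightarrow> (nat \<Rightarrow> complex) \<Rightarrow> bool" where
  "diag_stabilizes E m d \<longleftrightarrow> (\<forall>e\<in>E. \<forall>i\<in>e. d i ^ (m - 1) = (\<Prod>j\<in>e - {i}. d j))"

definition stabilizers :: "nat \<Rightarrow> nat \<Rightarrow> nat set set \<Rightarrow> (nat \<Rightarrow> complex) set" where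
  "stabilizers n m E =
     {d \<in> extensional {..<n}. d 0 = 1 \<and> (\<forall>i<n. d i \<noteq> 0) \<and> diag_stabilizes E m d}"

lemma adj_tensor_diag_similar_iff:
  assumes H: "hg_uniform n m E" and nz: "\<forall>i<n. d i \<noteq> 0"
  shows "(\<forall>i<n. \<forall>js\<in>index_lists (m - 1) n. adj_tensor m E (i # js) =
            inverse (d i ^ (m - 1)) * adj_tensor m E (i # js) * prod_list (map d js))
         \<longleftrightarrow> diag_stabilizes E m d"
    (is "(\<forall>i<n. \<forall>js\<in>_. ?inv i js) \<longleftrightarrow> _")
proof -
  have on_edge: "?inv i js \<longleftrightarrow> d i ^ (m - 1) = (\<Prod>j\<in>set (i # js) - {i}. d j)"
    if i: "i < n" and js: "js \<in> index_lists (m - 1) n" and e: "set (i # js) \<in> E" for i js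
  proof -
    have "distinct (i # js)" by (rule distinct_edge_index_list[OF H js e])
    then have "prod_list (map d js) = (\<Prod>j\<in>set (i # js) - {i}. d j)"
      by (simp add: prod.distinct_set_conv_list)
    with e nz i show ?thesis
      unfolding adj_tensor_def by (auto simp: field_simps)
  qed
  show ?thesis
  proof
    assume inv: "\<forall>i<n. \<forall>js\<in>index_lists (m - 1) n. ?inv i js"
    show "diag_stabilizes E m d"
      unfolding diag_stabilizes_def
    proof (intro ballI)
      fix e i assume e: "e \<in> E" and i: "i \<in> e"
      obtain js where js: "set js = e - {i}" "distinct js"
        using finite_distinct_list[of "e - {i}"] hg_uniformD(3)[OF H e] by auto
      have "length js = m - 1"
        using js hg_uniformD[OF H e] i distinct_card[of js] by simp
      with js hg_uniformD(1)[OF H e] have "js \<in> index_lists (m - 1) n"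
        unfolding index_lists_def by auto
      moreover have "set (i # js) = e" using js i by auto
      moreover have "i < n" using hg_uniformD(1)[OF H e] i by auto
      ultimately show "d i ^ (m - 1) = (\<Prod>j\<in>e - {i}. d j)"
        using inv on_edge e by metis
    qed
  next
    assume "diag_stabilizes E m d"
    then show "\<forall>i<n. \<forall>js\<in>index_lists (m - 1) n. ?inv i js"
      using on_edge unfolding diag_stabilizes_def by (auto simp: adj_tensor_def)
  qed
qed

lemma stabilizing_index_adj_tensor:
  assumes "hg_uniform n m E"
  shows "stabilizing_index m n (adj_tensor m E) = card (stabilizers n m E)"
  unfolding stabilizing_index_def stabilizers_def
  using adj_tensor_diag_similar_iff[OF assms] by (intro arg_cong[where f = card]) blast

section \<open>Stabilizers of a connected uniform hypergraph\<close>

text \<open>Every edge product of a stabilizer is \<open>1\<close>, so its values on \<open>K\<close> determine it on this closure.\<close>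
inductive_set forced_closure :: "nat set set \<Rightarrow> nat set \<Rightarrow> nat set" for E K where
  base: "x \<in> K \<Longrightarrow> x \<in> forced_closure E K"
| edge: "e \<in> E \<Longrightarrow> x \<in> e \<Longrightarrow> \<forall>y\<in>e - {x}. y \<in> forced_closure E K \<Longrightarrow> x \<in> forced_closure E K"

lemma hg_adj_rtranclp_induct:
  assumes "(hg_adj E)\<^sup>*\<^sup>* a b" "P a"
    and "\<And>e x y. e \<in> E \<Longrightarrow> x \<in> e \<Longrightarrow> y \<in> e \<Longrightarrow> P x \<Longrightarrow> P y"
  shows "P b"
  using assms(1,2)
proof (induction rule: rtranclp_induct)
  case (step y z)
  then obtain e where "e \<in> E" "y \<in> e" "z \<in> e" unfolding hg_adj_def by auto
  with step assms(3) show ?case by blast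
qed

locale connected_uniform_hypergraph =
  fixes n m :: nat and E :: "nat set set"
  assumes uniform: "hg_uniform n m E" and connected: "hg_connected n E"
    and several_edges: "card E > 1"
begin

lemma finite_edges: "finite E"
  using hg_uniform_finite[OF uniform] .

lemma edge_subset: "e \<in> E \<Longrightarrow> e \<subseteq> {..<n}"
  and card_edge: "e \<in> E \<Longrightarrow> card e = m"
  and finite_edge: "e \<in> E \<Longrightarrow> finite e"
  using hg_uniformD[OF uniform] by auto

lemma edge_vertex_less: "e \<in> E \<Longrightarrow> i \<in> e \<Longrightarrow> i < n"
  using edge_subset by auto

lemma obtain_two_edges:
  obtains e e' where "e \<in> E" "e' \<in> E" "e \<noteq> e'"
proof -
  have "\<not> card E \<le> 1" using several_edges by simp
  then show ?thesis using that by (auto simp: card_le_Suc0_iff_eq[OF finite_edges])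
qed

lemma edge_path_induct:
  assumes "a < n" "b < n" "P a" "\<And>e x y. e \<in> E \<Longrightarrow> x \<in> e \<Longrightarrow> y \<in> e \<Longrightarrow> P x \<Longrightarrow> P y"
  shows "P b"
  using connected assms unfolding hg_connected_def by (blast intro: hg_adj_rtranclp_induct)

text \<open>For \<open>m \<le> 1\<close> every edge is empty or a singleton, so connectivity forbids two distinct edges.\<close>
lemma two_le_card_edge: "2 \<le> m"
proof (rule ccontr)
  assume "\<not> 2 \<le> m"
  obtain e e' where e: "e \<in> E" "e' \<in> E" "e \<noteq> e'" by (rule obtain_two_edges)
  have singleton: "\<exists>a. f = {a}" if "f \<in> E" for f
  proof -
    have "card f = 1"
    proof (rule ccontr)
      assume "card f \<noteq> 1"
      then have "m = 0" using card_edge[OF that] \<open>\<not> 2 \<le> m\<close> by simp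
      then have "e = {}" "e' = {}" using card_edge finite_edge e(1,2) by auto
      with e(3) show False by simp
    qed
    then show ?thesis by (metis card_1_singletonE)
  qed
  obtain a b where a: "e = {a}" and b: "e' = {b}" using singleton e by metis
  have "b = a"
  proof (rule edge_path_induct[of a b])
    fix f x y assume "f \<in> E" "x \<in> f" "y \<in> f" "x = a"
    then show "y = a" using singleton by fastforce
  qed (use a b e edge_vertex_less in auto)
  with a b e show False by simp
qed

lemma edge_nonempty: "e \<in> E \<Longrightarrow> e \<noteq> {}"
  using card_edge two_le_card_edge by fastforce

lemma edge_has_other_vertex:
  assumes "e \<in> E" obtains y where "y \<in> e" "y \<noteq> x"
proof -
  have "card (e - {x}) \<noteq> 0"
    using card_Diff1_le[of e x] card_edge[OF assms] two_le_card_edge finite_edge[OF assms]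
    by (cases "x \<in> e") auto
  then obtain y where "y \<in> e - {x}" by (metis card.empty ex_in_conv)
  then show ?thesis using that by blast
qed

lemma n_pos: "0 < n"
proof -
  obtain e e' where "e \<in> E" "e' \<in> E" "e \<noteq> e'" by (rule obtain_two_edges)
  with edge_nonempty edge_vertex_less show ?thesis by fastforce
qed

lemma edge_subset_eq: "e \<in> E \<Longrightarrow> f \<in> E \<Longrightarrow> e \<subseteq> f \<Longrightarrow> e = f"
  using card_subset_eq finite_edge card_edge by metis

lemma stabilizer_power_eq_edge_prod:
  assumes d: "d \<in> stabilizers n m E" and e: "e \<in> E" and i: "i \<in> e"
  shows "d i ^ m = (\<Prod>j\<in>e. d j)"
proof -
  have "d i ^ m = d i * d i ^ (m - 1)" using two_le_card_edge by (cases m) auto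
  also have "d i ^ (m - 1) = (\<Prod>j\<in>e - {i}. d j)"
    using d e i unfolding stabilizers_def diag_stabilizes_def by blast
  also have "d i * \<dots> = (\<Prod>j\<in>e. d j)" using prod.remove[OF finite_edge[OF e] i, of d] by simp
  finally show ?thesis .
qed

text \<open>Within an edge all \<open>d i ^ m\<close> coincide, so connectivity spreads \<open>d 0 ^ m = 1\<close>.\<close>
lemma stabilizer_root_of_unity:
  assumes d: "d \<in> stabilizers n m E" and i: "i < n"
  shows "d i ^ m = 1"
proof (rule edge_path_induct[where P = "\<lambda>x. d x ^ m = 1", OF n_pos i])
  show "d 0 ^ m = 1" using d unfolding stabilizers_def by simp
next
  fix e x y assume e: "e \<in> E" "x \<in> e" "y \<in> e" and "d x ^ m = 1"
  moreover have "d y ^ m = d x ^ m"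
    using stabilizer_power_eq_edge_prod[OF d e(1)] e(2,3) by simp
  ultimately show "d y ^ m = 1" by simp
qed

lemma norm_stabilizer:
  assumes d: "d \<in> stabilizers n m E" and i: "i < n"
  shows "cmod (d i) = 1"
proof -
  have "cmod (d i) ^ m = 1 ^ m"
    using stabilizer_root_of_unity[OF d i] by (simp add: norm_power[symmetric])
  then show ?thesis using power_eq_imp_eq_base[of "cmod (d i)" m 1] two_le_card_edge by simp
qed

lemma stabilizer_edge_prod:
  assumes d: "d \<in> stabilizers n m E" and e: "e \<in> E"
  shows "(\<Prod>j\<in>e. d j) = 1"
proof -
  obtain i where "i \<in> e" using edge_nonempty[OF e] by auto
  with stabilizer_power_eq_edge_prod[OF d e] stabilizer_root_of_unity[OF d] edge_vertex_less[OF e]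
  show ?thesis by simp
qed

lemma pointwise_one_stabilizer: "pointwise_one {..<n} \<in> stabilizers n m E"
  using n_pos edge_vertex_less
  unfolding stabilizers_def diag_stabilizes_def pointwise_one_def by (auto intro!: prod.neutral)

lemma pointwise_mult_stabilizer:
  assumes d: "d \<in> stabilizers n m E" and d': "d' \<in> stabilizers n m E"
  shows "pointwise_mult {..<n} d d' \<in> stabilizers n m E"
  unfolding stabilizers_def diag_stabilizes_def
proof (intro CollectI conjI allI impI ballI)
  show "pointwise_mult {..<n} d d' \<in> extensional {..<n}" "pointwise_mult {..<n} d d' 0 = 1"
    "\<And>i. i < n \<Longrightarrow> pointwise_mult {..<n} d d' i \<noteq> 0"
    using d d' n_pos unfolding pointwise_mult_def stabilizers_def by auto
next
  fix e i assume e: "e \<in> E" and i: "i \<in> e"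
  have "pointwise_mult {..<n} d d' i ^ (m - 1) = d i ^ (m - 1) * d' i ^ (m - 1)"
    using edge_vertex_less[OF e i] unfolding pointwise_mult_def by (simp add: power_mult_distrib)
  also have "\<dots> = (\<Prod>j\<in>e - {i}. d j) * (\<Prod>j\<in>e - {i}. d' j)"
    using d d' e i unfolding stabilizers_def diag_stabilizes_def by auto
  also have "\<dots> = (\<Prod>j\<in>e - {i}. pointwise_mult {..<n} d d' j)"
    unfolding prod.distrib[symmetric] pointwise_mult_def using edge_vertex_less[OF e]
    by (intro prod.cong) auto
  finally show "pointwise_mult {..<n} d d' i ^ (m - 1) = (\<Prod>j\<in>e - {i}. pointwise_mult {..<n} d d' j)" .
qed

lemma root_of_unity_group_stabilizers: "root_of_unity_group m {..<n} (stabilizers n m E)"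
  unfolding root_of_unity_group_def
  using pointwise_one_stabilizer pointwise_mult_stabilizer stabilizer_root_of_unity
  by (auto simp: stabilizers_def)

lemma stabilizers_subset_roots: "stabilizers n m E \<subseteq> PiE {..<n} (\<lambda>_. {z. z ^ m = 1})"
  using stabilizer_root_of_unity by (auto simp: stabilizers_def PiE_def)

lemma finite_stabilizers: "finite (stabilizers n m E)"
  using two_le_card_edge
  by (intro finite_subset[OF stabilizers_subset_roots] finite_PiE finite_roots_unity) auto

lemma stabilizers_agree_on_forced_closure:
  assumes d: "d \<in> stabilizers n m E" and d': "d' \<in> stabilizers n m E"
    and agree: "\<forall>i\<in>K. d i = d' i" and x: "x \<in> forced_closure E K"
  shows "d x = d' x"
  using x
proof (induction rule: forced_closure.induct)
  case (base x)
  then show ?case using agree by blast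
next
  case (edge e x)
  have "d x * (\<Prod>j\<in>e - {x}. d j) = 1" "d' x * (\<Prod>j\<in>e - {x}. d' j) = 1"
    using stabilizer_edge_prod[OF d edge(1)] stabilizer_edge_prod[OF d' edge(1)]
      prod.remove[OF finite_edge[OF edge(1)] edge(2), of d]
      prod.remove[OF finite_edge[OF edge(1)] edge(2), of d'] by simp_all
  moreover have "(\<Prod>j\<in>e - {x}. d j) = (\<Prod>j\<in>e - {x}. d' j)"
    using edge(3) by (intro prod.cong) auto
  ultimately show ?case by (metis mult_cancel_right mult_zero_right zero_neq_one)
qed

section \<open>Forcing sets from a maximum matching\<close>

lemma obtain_maximum_matching:
  obtains M where "M \<subseteq> E" "pairwise disjnt M" "card M = matching_number E"
proof -
  let ?S = "{card M | M. M \<subseteq> E \<and> pairwise disjnt M}"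
  have "?S \<subseteq> {..card E}" using card_mono[OF finite_edges] by auto
  then have "finite ?S" by (rule finite_subset) simp
  moreover have "card {} \<in> ?S" by (intro CollectI exI[of _ "{}"]) auto
  ultimately have "matching_number E \<in> ?S"
    unfolding matching_number_def by (intro Max_in) auto
  then obtain M where "M \<subseteq> E" "pairwise disjnt M" "matching_number E = card M" by blast
  then show ?thesis by (intro that) simp_all
qed

lemma matching_disjoint:
  "pairwise disjnt M \<Longrightarrow> e \<in> M \<Longrightarrow> e' \<in> M \<Longrightarrow> x \<in> e \<Longrightarrow> x \<in> e' \<Longrightarrow> e = e'"
  unfolding pairwise_def disjnt_def by blast

text \<open>If all edges were pairwise disjoint, each of them would be a connected component.\<close>
lemma obtain_edge_not_in_matching:
  assumes M: "M \<subseteq> E" "pairwise disjnt M"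
  obtains f where "f \<in> E" "f \<notin> M"
proof (rule ccontr)
  assume "\<not> thesis"
  with that have EM: "E \<subseteq> M" by blast
  obtain e e' where e: "e \<in> E" "e' \<in> E" "e \<noteq> e'" by (rule obtain_two_edges)
  obtain a b where ab: "a \<in> e" "b \<in> e'" using edge_nonempty e by blast
  have "b \<in> e"
  proof (rule edge_path_induct[where P = "\<lambda>x. x \<in> e"])
    fix f x y assume "f \<in> E" "x \<in> f" "y \<in> f" "x \<in> e"
    with EM e(1) matching_disjoint[OF M(2)] show "y \<in> e" by blast
  qed (use ab e edge_vertex_less in auto)
  with ab EM e matching_disjoint[OF M(2)] show False by blast
qed

text \<open>The forcing order: first the pivots of matching edges avoiding \<open>q\<close>, then \<open>q\<close> through \<open>f\<close>,
  finally the pivot of the matching edge through \<open>q\<close>.\<close>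
lemma pivots_forced:
  assumes M: "M \<subseteq> E" "pairwise disjnt M" and p: "\<forall>e\<in>M. p e \<in> e"
    and f: "f \<in> E" "q \<in> f" and q: "q \<notin> p ` M" and avoid: "\<forall>e\<in>M. q \<in> e \<longrightarrow> p e \<notin> f"
  shows "{..<n} \<subseteq> forced_closure E ({..<n} - insert q (p ` M))"
proof -
  define U where "U = insert q (p ` M)"
  define F where "F = forced_closure E ({..<n} - U)"
  have K: "y \<in> F" if "y < n" "y \<notin> U" for y
    using that unfolding F_def by (auto intro: forced_closure.base)
  have pivot: "p e \<in> F" if e: "e \<in> M" and "q \<notin> e \<or> q \<in> F" for e
    unfolding F_def
  proof (rule forced_closure.edge)
    show "e \<in> E" "p e \<in> e" using e M p by auto
    show "\<forall>y\<in>e - {p e}. y \<in> forced_closure E ({..<n} - U)"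
    proof
      fix y assume y: "y \<in> e - {p e}"
      have "y \<notin> p ` M" using y p matching_disjoint[OF M(2) e] by fastforce
      with y that K edge_vertex_less[of e y] e M(1) show "y \<in> forced_closure E ({..<n} - U)"
        unfolding U_def F_def by auto
    qed
  qed
  have "q \<in> F"
    unfolding F_def
  proof (rule forced_closure.edge[OF f])
    show "\<forall>y\<in>f - {q}. y \<in> forced_closure E ({..<n} - U)"
    proof
      fix y assume y: "y \<in> f - {q}"
      show "y \<in> forced_closure E ({..<n} - U)"
      proof (cases "y \<in> p ` M")
        case True
        then obtain e where "e \<in> M" "y = p e" by auto
        with y avoid pivot show ?thesis unfolding F_def by blast
      next
        case False
        with y K edge_vertex_less[OF f(1)] show ?thesis unfolding U_def F_def by auto
      qed
    qed
  qed
  with pivot K have "{..<n} \<subseteq> F" unfolding U_def by blast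
  then show ?thesis unfolding F_def U_def .
qed

lemma obtain_edge_crossing_matching:
  assumes M: "M \<subseteq> E" "pairwise disjnt M" and covered: "\<forall>f\<in>E. \<forall>q\<in>f. q \<noteq> 0 \<longrightarrow> q \<in> \<Union>M"
  obtains f e1 q p1 where "f \<in> E" "e1 \<in> M" "q \<in> f" "q \<in> e1" "q \<noteq> 0" "p1 \<in> e1" "p1 \<notin> f" "p1 \<noteq> 0"
proof -
  obtain f where f: "f \<in> E" "f \<notin> M" using obtain_edge_not_in_matching[OF M] .
  obtain q where q: "q \<in> f" "q \<noteq> 0" "\<forall>e\<in>M. 0 \<in> e \<longrightarrow> q \<notin> e"
  proof (cases "\<exists>e0\<in>M. 0 \<in> e0")
    case True
    then obtain e0 where e0: "e0 \<in> M" "0 \<in> e0" by blast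
    have "\<not> f \<subseteq> e0" using edge_subset_eq[OF f(1), of e0] e0(1) M(1) f(2) by auto
    then obtain q0 where q0: "q0 \<in> f" "q0 \<notin> e0" by blast
    have "q0 \<noteq> 0" using q0(2) e0(2) by metis
    moreover have "\<forall>e\<in>M. 0 \<in> e \<longrightarrow> q0 \<notin> e"
      using matching_disjoint[OF M(2) _ e0(1) _ e0(2)] q0(2) by blast
    ultimately show ?thesis using q0(1) that by blast
  next
    case False
    obtain q where "q \<in> f" "q \<noteq> 0" using edge_has_other_vertex[OF f(1)] .
    with False show ?thesis by (intro that) auto
  qed
  have "q \<in> \<Union>M" using covered f(1) q(1,2) by blast
  then obtain e1 where e1: "e1 \<in> M" "q \<in> e1" by blast
  have "0 \<notin> e1" using q(3) e1 by blast
  have "\<not> e1 \<subseteq> f" using edge_subset_eq[OF _ f(1), of e1] e1(1) M(1) f(2) by auto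
  then obtain p1 where p1: "p1 \<in> e1" "p1 \<notin> f" by blast
  moreover have "p1 \<noteq> 0" using p1(1) \<open>0 \<notin> e1\<close> by metis
  ultimately show ?thesis using that f(1) e1 q(1,2) by blast
qed

lemma obtain_pivots:
  assumes M: "M \<subseteq> E" "pairwise disjnt M"
  obtains p q f where "\<forall>e\<in>M. p e \<in> e \<and> p e \<noteq> 0" "q \<noteq> 0" "f \<in> E" "q \<in> f" "q \<notin> p ` M"
    "\<forall>e\<in>M. q \<in> e \<longrightarrow> p e \<notin> f"
proof -
  have "\<exists>y. y \<in> e \<and> y \<noteq> 0" if "e \<in> M" for e
    using edge_has_other_vertex[of e 0] M(1) that by blast
  then obtain p0 where p0: "\<forall>e\<in>M. p0 e \<in> e \<and> p0 e \<noteq> 0" by metis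
  show ?thesis
  proof (cases "\<forall>f\<in>E. \<forall>q\<in>f. q \<noteq> 0 \<longrightarrow> q \<in> \<Union>M")
    case False
    then obtain f q where "f \<in> E" "q \<in> f" "q \<noteq> 0" "q \<notin> \<Union>M" by blast
    with p0 show ?thesis by (intro that[of p0 q f]) blast+
  next
    case True
    obtain f e1 q p1 where f: "f \<in> E" and e1: "e1 \<in> M" and q: "q \<in> f" "q \<in> e1" "q \<noteq> 0"
      and p1: "p1 \<in> e1" "p1 \<notin> f" "p1 \<noteq> 0"
      by (rule obtain_edge_crossing_matching[OF M True])
    define p where "p = p0(e1 := p1)"
    have in_e1: "e = e1" if "e \<in> M" "q \<in> e" for e
      using matching_disjoint[OF M(2) that(1) e1 that(2) q(2)] .
    show ?thesis
    proof (rule that[of p q f])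
      show "\<forall>e\<in>M. p e \<in> e \<and> p e \<noteq> 0" using p0 p1 unfolding p_def by simp
      show "\<forall>e\<in>M. q \<in> e \<longrightarrow> p e \<notin> f" using in_e1 p1(2) by (simp add: p_def)
      show "q \<notin> p ` M"
      proof
        assume "q \<in> p ` M"
        then obtain e where e: "e \<in> M" "q = p e" by blast
        show False
        proof (cases "e = e1")
          case True
          with e p1(2) q(1) show False by (simp add: p_def)
        next
          case False
          with e p0 have "q \<in> e" by (simp add: p_def)
          with in_e1 e(1) False show False by blast
        qed
      qed
    qed (use f q in simp_all)
  qed
qed

lemma obtain_forcing_set:
  obtains U where "U \<subseteq> {..<n}" "0 \<notin> U" "card U = matching_number E + 1"
    "{..<n} \<subseteq> forced_closure E ({..<n} - U)"
proof -
  obtain M where M: "M \<subseteq> E" "pairwise disjnt M" "card M = matching_number E"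
    by (rule obtain_maximum_matching)
  obtain p q f where p: "\<forall>e\<in>M. p e \<in> e \<and> p e \<noteq> 0" and q: "q \<noteq> 0" "f \<in> E" "q \<in> f" "q \<notin> p ` M"
    and avoid: "\<forall>e\<in>M. q \<in> e \<longrightarrow> p e \<notin> f"
    using obtain_pivots[OF M(1,2)] by blast
  have "inj_on p M" using p matching_disjoint[OF M(2)] by (intro inj_onI) metis
  then have "card (insert q (p ` M)) = matching_number E + 1"
    using q(4) M(3) finite_subset[OF M(1) finite_edges] by (simp add: card_image)
  moreover have "insert q (p ` M) \<subseteq> {..<n}"
    using p q M(1) edge_vertex_less by blast
  moreover have "0 \<notin> insert q (p ` M)" using p q(1) by (metis image_iff insertE)
  moreover have "{..<n} \<subseteq> forced_closure E ({..<n} - insert q (p ` M))"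
    using p by (intro pivots_forced[OF M(1,2) _ q(2,3,4) avoid]) simp
  ultimately show ?thesis using that[of "insert q (p ` M)"] by blast
qed

lemma obtain_determining_set:
  obtains W where "W \<subseteq> {..<n}" "card W = n - matching_number E - 2"
    "inj_on (\<lambda>d. restrict d W) (stabilizers n m E)"
proof -
  obtain U where U: "U \<subseteq> {..<n}" "0 \<notin> U" "card U = matching_number E + 1"
    and forced: "{..<n} \<subseteq> forced_closure E ({..<n} - U)"
    by (rule obtain_forcing_set)
  define W where "W = {..<n} - insert 0 U"
  have "card W = n - matching_number E - 2"
    unfolding W_def using U n_pos by (subst card_Diff_subset) (auto dest: finite_subset)
  moreover have "inj_on (\<lambda>d. restrict d W) (stabilizers n m E)"
  proof (rule inj_onI)
    fix d d' assume d: "d \<in> stabilizers n m E" and d': "d' \<in> stabilizers n m E"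
      and restr: "restrict d W = restrict d' W"
    have "d i = d' i" if "i \<in> {..<n} - U" for i
    proof (cases "i = 0")
      case True
      with d d' show ?thesis by (simp add: stabilizers_def)
    next
      case False
      with that have "i \<in> W" unfolding W_def by simp
      then show ?thesis using restr by (metis restrict_apply')
    qed
    then have "\<forall>i<n. d i = d' i"
      using forced stabilizers_agree_on_forced_closure[OF d d'] by blast
    with d d' show "d = d'" unfolding stabilizers_def by (intro extensionalityI) auto
  qed
  moreover have "W \<subseteq> {..<n}" unfolding W_def by blast
  ultimately show ?thesis using that[of W] by blast
qed

text \<open>Restriction to the determining set \<open>W\<close> embeds the stabilizers into \<open>\<mu>\<^sub>m\<^sup>W\<close>.\<close>
lemma card_stabilizers_dvd: "card (stabilizers n m E) dvd m ^ (n - matching_number E - 2)"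
proof -
  obtain W where W: "W \<subseteq> {..<n}" "card W = n - matching_number E - 2"
    and inj: "inj_on (\<lambda>d. restrict d W) (stabilizers n m E)"
    by (rule obtain_determining_set)
  have m: "m \<ge> 1" using two_le_card_edge by simp
  have fin_W: "finite W" using W(1) finite_subset by blast
  have "card ((\<lambda>d. restrict d W) ` stabilizers n m E) dvd card (PiE W (\<lambda>_. {z::complex. z ^ m = 1}))"
  proof (rule root_of_unity_group_card_dvd[OF _ root_of_unity_group_PiE _ _ m])
    show "root_of_unity_group m W ((\<lambda>d. restrict d W) ` stabilizers n m E)"
      by (rule root_of_unity_group_restrict[OF root_of_unity_group_stabilizers W(1)])
    show "(\<lambda>d. restrict d W) ` stabilizers n m E \<subseteq> PiE W (\<lambda>_. {z. z ^ m = 1})"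
      using W(1) stabilizer_root_of_unity by (auto simp: PiE_def)
    show "finite (PiE W (\<lambda>_. {z::complex. z ^ m = 1}))"
      using fin_W finite_roots_unity[OF m] by (intro finite_PiE) auto
  qed
  then show ?thesis
    using card_image[OF inj] fin_W card_complex_roots_unity[OF m] W(2) by (simp add: card_PiE)
qed

end

section \<open>A positive Perron vector\<close>

definition edge_poly :: "nat set set \<Rightarrow> (nat \<Rightarrow> real) \<Rightarrow> real" where
  "edge_poly E x = (\<Sum>e\<in>E. \<Prod>j\<in>e. x j)"

definition power_sum :: "nat \<Rightarrow> nat \<Rightarrow> (nat \<Rightarrow> real) \<Rightarrow> real" where
  "power_sum n m x = (\<Sum>i<n. x i ^ m)"

context connected_uniform_hypergraph
begin

text \<open>A maximizer of \<open>edge_poly\<close> on the nonnegative part of the unit \<open>\<ell>\<^sup>m\<close>-sphere, with the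
  maximality stated in the homogeneous form that survives rescaling.\<close>
definition edge_poly_maximizer :: "(nat \<Rightarrow> real) \<Rightarrow> bool" where
  "edge_poly_maximizer x \<longleftrightarrow> (\<forall>i<n. 0 \<le> x i) \<and> power_sum n m x = 1 \<and>
     (\<forall>y. (\<forall>i<n. 0 \<le> y i) \<longrightarrow> edge_poly E y \<le> edge_poly E x * power_sum n m y)"

lemma edge_poly_scale: "edge_poly E (\<lambda>i. c * y i) = c ^ m * edge_poly E y"
  unfolding edge_poly_def sum_distrib_left
  by (intro sum.cong refl) (simp add: prod.distrib card_edge)

lemma power_sum_scale: "power_sum n m (\<lambda>i. c * y i) = c ^ m * power_sum n m y"
  unfolding power_sum_def by (simp add: sum_distrib_left power_mult_distrib)

lemma adj_apply_scale: "adj_apply E (\<lambda>j. c * y j) i = c ^ (m - 1) * adj_apply E y i"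
  unfolding adj_apply_def sum_distrib_left
  by (intro sum.cong refl) (simp add: prod.distrib card_edge finite_edge)

lemma adj_apply_cong: "(\<And>j. j < n \<Longrightarrow> a j = b j) \<Longrightarrow> adj_apply E a i = adj_apply E b i"
  unfolding adj_apply_def using edge_vertex_less by (intro sum.cong refl prod.cong) auto

lemma adj_apply_mono:
  fixes a b :: "nat \<Rightarrow> real"
  assumes "\<And>j. j < n \<Longrightarrow> 0 \<le> a j \<and> a j \<le> b j"
  shows "adj_apply E a i \<le> adj_apply E b i"
  unfolding adj_apply_def using assms edge_vertex_less by (intro sum_mono prod_mono) auto

lemma norm_adj_apply_le: "cmod (adj_apply E y i) \<le> adj_apply E (\<lambda>j. cmod (y j)) i"
  unfolding adj_apply_def by (rule order_trans[OF norm_sum]) (simp add: prod_norm)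

lemma adj_apply_eq_imp_edge_prod_eq:
  fixes a b :: "nat \<Rightarrow> real"
  assumes ab: "\<And>j. j < n \<Longrightarrow> 0 \<le> a j \<and> a j \<le> b j" and eq: "adj_apply E a x = adj_apply E b x"
    and e: "e \<in> E" "x \<in> e"
  shows "(\<Prod>j\<in>e - {x}. a j) = (\<Prod>j\<in>e - {x}. b j)"
proof -
  have "(\<Sum>e'\<in>{e\<in>E. x \<in> e}. (\<Prod>j\<in>e' - {x}. b j) - (\<Prod>j\<in>e' - {x}. a j)) = 0"
    using eq unfolding adj_apply_def by (simp add: sum_subtractf)
  moreover have "0 \<le> (\<Prod>j\<in>e' - {x}. b j) - (\<Prod>j\<in>e' - {x}. a j)" if "e' \<in> E" for e'
  proof -
    have "(\<Prod>j\<in>e' - {x}. a j) \<le> (\<Prod>j\<in>e' - {x}. b j)"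
      using ab edge_vertex_less[OF that] by (auto intro!: prod_mono)
    then show ?thesis by simp
  qed
  ultimately have "\<forall>e'\<in>{e\<in>E. x \<in> e}. (\<Prod>j\<in>e' - {x}. b j) - (\<Prod>j\<in>e' - {x}. a j) = 0"
    using sum_nonneg_eq_0_iff[of "{e\<in>E. x \<in> e}" "\<lambda>e'. (\<Prod>j\<in>e' - {x}. b j) - (\<Prod>j\<in>e' - {x}. a j)"]
      finite_edges by simp
  with e show ?thesis by simp
qed

lemma eigenpair_adj_tensor_iff:
  "eigenpair m n (adj_tensor m E) lam y \<longleftrightarrow>
     (\<exists>i<n. y i \<noteq> 0) \<and> (\<forall>i<n. adj_apply E y i = lam * y i ^ (m - 1))"
  unfolding eigenpair_def using tensor_apply_adj_tensor[OF uniform] by simp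

lemma edge_poly_cong: "(\<And>i. i < n \<Longrightarrow> x i = y i) \<Longrightarrow> edge_poly E x = edge_poly E y"
  unfolding edge_poly_def using edge_vertex_less by (intro sum.cong refl prod.cong) auto

lemma edge_poly_le_on_sphere_imp_le:
  assumes max: "\<And>w. (\<forall>i<n. 0 \<le> w i \<and> w i \<le> 1) \<Longrightarrow> power_sum n m w = 1 \<Longrightarrow> edge_poly E w \<le> F"
    and y: "\<forall>i<n. 0 \<le> y i"
  shows "edge_poly E y \<le> F * power_sum n m y"
proof (cases "power_sum n m y = 0")
  case True
  then have "\<forall>i\<in>{..<n}. y i ^ m = 0"
    using y unfolding power_sum_def by (subst sum_nonneg_eq_0_iff[symmetric]) auto
  then have "edge_poly E y = 0"
    using edge_nonempty edge_vertex_less finite_edge unfolding edge_poly_def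
    by (intro sum.neutral ballI) (metis ex_in_conv lessThan_iff power_eq_0_iff prod_zero_iff)
  with True show ?thesis by simp
next
  case False
  have "power_sum n m y \<ge> 0" unfolding power_sum_def using y by (intro sum_nonneg) auto
  with False have pos: "power_sum n m y > 0" by simp
  define c where "c = root m (power_sum n m y)"
  have cm: "c ^ m = power_sum n m y" and c: "c > 0"
    unfolding c_def using two_le_card_edge pos by (auto intro: real_root_pow_pos2)
  define w where "w = (\<lambda>i. (1 / c) * y i)"
  have "power_sum n m w = 1" unfolding w_def power_sum_scale using cm c pos by (simp add: power_divide)
  moreover have "0 \<le> w i \<and> w i \<le> 1" if i: "i < n" for i
  proof
    show w0: "0 \<le> w i" unfolding w_def using i y c by simp
    have "w i ^ m \<le> power_sum n m w"
      unfolding power_sum_def using i w0 y c by (intro member_le_sum) (auto simp: w_def)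
    with \<open>power_sum n m w = 1\<close> show "w i \<le> 1"
      using w0 power_le_one_iff[OF w0, of m] two_le_card_edge by simp
  qed
  ultimately have "edge_poly E w \<le> F" by (intro max) auto
  then have "(1 / c) ^ m * edge_poly E y \<le> F" unfolding w_def edge_poly_scale .
  then show ?thesis using cm c pos by (simp add: power_divide divide_le_eq mult.commute)
qed

lemma edge_poly_maximizer_exists: "\<exists>x. edge_poly_maximizer x"
proof -
  define X where "X = product_topology (\<lambda>_. euclideanreal) {..<n}"
  define K where "K = {x \<in> PiE {..<n} (\<lambda>_. {0..1::real}). power_sum n m x = 1}"
  have proj: "\<And>j. j < n \<Longrightarrow> continuous_map X euclideanreal (\<lambda>x. x j)"
    unfolding X_def by (rule continuous_map_product_projection) simp
  have "continuous_map X euclideanreal (power_sum n m)"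
    unfolding power_sum_def by (intro continuous_map_sum continuous_map_real_pow proj) auto
  then have "compactin X ({x \<in> topspace X. power_sum n m x \<in> {1}} \<inter> PiE {..<n} (\<lambda>_. {0..1}))"
    by (intro closed_Int_compactin closedin_continuous_map_preimage) (auto simp: X_def compactin_PiE)
  also have "{x \<in> topspace X. power_sum n m x \<in> {1}} \<inter> PiE {..<n} (\<lambda>_. {0..1}) = K"
    unfolding K_def X_def by (auto simp: PiE_def)
  finally have "compactin X K" .
  moreover have "continuous_map X euclideanreal (edge_poly E)"
    unfolding edge_poly_def
    by (intro continuous_map_sum continuous_map_prod finite_edges finite_edge proj edge_vertex_less)
  ultimately have "compact (edge_poly E ` K)"
    using image_compactin by fastforce
  moreover have "(\<lambda>i\<in>{..<n}. if i = 0 then 1 else 0) \<in> K"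
  proof -
    have "power_sum n m (\<lambda>i\<in>{..<n}. if i = 0 then 1 else 0) = (\<Sum>i<n. if i = 0 then 1 else 0)"
      unfolding power_sum_def using two_le_card_edge by (intro sum.cong) auto
    also have "\<dots> = 1" using n_pos by simp
    finally show ?thesis unfolding K_def by auto
  qed
  ultimately obtain x where x: "x \<in> K" "\<forall>w\<in>K. edge_poly E w \<le> edge_poly E x"
    using compact_attains_sup[of "edge_poly E ` K"] by blast
  have "edge_poly E w \<le> edge_poly E x"
    if "\<forall>i<n. 0 \<le> w i \<and> w i \<le> 1" "power_sum n m w = 1" for w
  proof -
    have "restrict w {..<n} \<in> K" using that unfolding K_def power_sum_def by auto
    then show ?thesis using x(2) edge_poly_cong[of w "restrict w {..<n}"] by simp
  qed
  with x(1) show ?thesis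
    unfolding edge_poly_maximizer_def K_def
    by (intro exI[of _ x]) (auto intro!: edge_poly_le_on_sphere_imp_le)
qed

lemma edge_poly_maximizer_pos:
  assumes x: "edge_poly_maximizer x"
  shows "edge_poly E x > 0"
proof -
  have "real (card E) = edge_poly E (\<lambda>_. 1)" unfolding edge_poly_def by simp
  also have "\<dots> \<le> edge_poly E x * power_sum n m (\<lambda>_. 1)"
    using x unfolding edge_poly_maximizer_def by simp
  also have "power_sum n m (\<lambda>_. 1) = real n" unfolding power_sum_def by simp
  finally have "0 < edge_poly E x * real n" using several_edges by linarith
  with n_pos show ?thesis by (simp add: zero_less_mult_iff)
qed

lemma edge_poly_update:
  "edge_poly E (x(i := a)) = edge_poly E x + (a - x i) * adj_apply E x i"
proof -
  have "(\<Prod>j\<in>e. (x(i := a)) j) = (\<Prod>j\<in>e. x j) + (if i \<in> e then (a - x i) * (\<Prod>j\<in>e - {i}. x j) else 0)"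
    if "e \<in> E" for e
  proof (cases "i \<in> e")
    case True
    then show ?thesis
      using prod.remove[OF finite_edge[OF that] True, of x] prod.remove[OF finite_edge[OF that] True, of "x(i := a)"]
      by (simp add: algebra_simps)
  qed (auto intro: prod.cong)
  then have "edge_poly E (x(i := a)) =
      edge_poly E x + (\<Sum>e\<in>E. if i \<in> e then (a - x i) * (\<Prod>j\<in>e - {i}. x j) else 0)"
    unfolding edge_poly_def by (simp add: sum.distrib)
  also have "(\<Sum>e\<in>E. if i \<in> e then (a - x i) * (\<Prod>j\<in>e - {i}. x j) else 0) = (a - x i) * adj_apply E x i"
    unfolding adj_apply_def sum_distrib_left by (simp add: sum.inter_filter[OF finite_edges])
  finally show ?thesis .
qed

lemma power_sum_update:
  "i < n \<Longrightarrow> power_sum n m (x(i := a)) = power_sum n m x - x i ^ m + a ^ m"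
  unfolding power_sum_def by (simp add: sum.remove[of "{..<n}" i])

lemma edge_prod_increase_le:
  assumes xy: "\<And>j. j < n \<Longrightarrow> 0 \<le> x j \<and> x j \<le> y j" and e: "e \<in> E"
  shows "(\<Prod>j\<in>e. y j) - (\<Prod>j\<in>e. x j) \<le> edge_poly E y - edge_poly E x"
proof -
  have "(\<Prod>j\<in>e. y j) - (\<Prod>j\<in>e. x j) \<le> (\<Sum>e'\<in>E. (\<Prod>j\<in>e'. y j) - (\<Prod>j\<in>e'. x j))"
    using e finite_edges xy edge_vertex_less
    by (intro member_le_sum) (auto intro!: prod_mono simp: le_diff_eq)
  then show ?thesis unfolding edge_poly_def by (simp add: sum_subtractf)
qed

lemma power_sum_raise:
  assumes "T \<subseteq> {..<n}" "\<forall>j\<in>T. x j = 0"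
  shows "power_sum n m (\<lambda>j. if j \<in> T then \<epsilon> else x j) = power_sum n m x + real (card T) * \<epsilon> ^ m"
proof -
  have "power_sum n m (\<lambda>j. if j \<in> T then \<epsilon> else x j) = (\<Sum>i<n. x i ^ m + (if i \<in> T then \<epsilon> ^ m else 0))"
    unfolding power_sum_def using assms(2) two_le_card_edge by (intro sum.cong) auto
  also have "\<dots> = power_sum n m x + (\<Sum>i<n. if i \<in> T then \<epsilon> ^ m else 0)"
    unfolding power_sum_def by (simp add: sum.distrib)
  also have "(\<Sum>i<n. if i \<in> T then \<epsilon> ^ m else 0) = (\<Sum>i\<in>T. \<epsilon> ^ m)"
    using assms(1) by (intro sum.mono_neutral_cong_right) auto
  finally show ?thesis by simp
qed

lemma edge_prod_raise_zeros:
  fixes x :: "nat \<Rightarrow> real"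
  assumes "finite e" "T \<subseteq> e" "v \<in> T" "\<forall>j\<in>T. x j = 0"
  shows "(\<Prod>j\<in>e. if j \<in> T then \<epsilon> else x j) - (\<Prod>j\<in>e. x j) = \<epsilon> ^ card T * (\<Prod>j\<in>e - T. x j)"
proof -
  have "v \<in> e" "x v = 0" using assms(2,3,4) by auto
  then have "(\<Prod>j\<in>e. x j) = 0" using prod_zero[OF assms(1), of x] by blast
  moreover have "(\<Prod>j\<in>e. if j \<in> T then \<epsilon> else x j) =
      (\<Prod>j\<in>T. if j \<in> T then \<epsilon> else x j) * (\<Prod>j\<in>e - T. if j \<in> T then \<epsilon> else x j)"
    using prod.subset_diff[OF assms(2,1), of "\<lambda>j. if j \<in> T then \<epsilon> else x j"] by (simp only: ac_simps)
  moreover have "(\<Prod>j\<in>T. if j \<in> T then \<epsilon> else x j) = \<epsilon> ^ card T" by simp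
  moreover have "(\<Prod>j\<in>e - T. if j \<in> T then \<epsilon> else x j) = (\<Prod>j\<in>e - T. x j)"
    by (intro prod.cong) auto
  ultimately show ?thesis by simp
qed

text \<open>If some vertex of an edge vanished, raising all vanishing coordinates of that edge to \<open>\<epsilon>\<close>
  would gain order \<open>\<epsilon>\<^sup>k\<close> in \<open>edge_poly\<close> at a cost of order \<open>\<epsilon>\<^sup>m\<close> in the constraint, with \<open>k < m\<close>.\<close>
lemma edge_poly_maximizer_edge_pos:
  assumes x: "edge_poly_maximizer x" and e: "e \<in> E" "u \<in> e" "v \<in> e" and u: "x u > 0"
  shows "x v > 0"
proof (rule ccontr)
  assume "\<not> x v > 0"
  have x0: "\<forall>i<n. 0 \<le> x i" and N: "power_sum n m x = 1"
    and max: "\<forall>y. (\<forall>i<n. 0 \<le> y i) \<longrightarrow> edge_poly E y \<le> edge_poly E x * power_sum n m y"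
    using x unfolding edge_poly_maximizer_def by auto
  with \<open>\<not> x v > 0\<close> e edge_vertex_less have "x v = 0" by force
  define T where "T = {j \<in> e. x j = 0}"
  define k where "k = card T"
  define c where "c = (\<Prod>j\<in>e - T. x j)"
  define F where "F = edge_poly E x"
  have "u \<notin> T" unfolding T_def using u by simp
  then have T: "T \<subseteq> e" "finite T" "v \<in> T" "T \<subset> e"
    unfolding T_def using finite_edge[OF e(1)] \<open>x v = 0\<close> e(2,3) by auto
  have k: "1 \<le> k" "k < m"
    unfolding k_def using T card_edge[OF e(1)] psubset_card_mono[OF finite_edge[OF e(1)] T(4)]
    by (auto simp: Suc_le_eq card_gt_0_iff)
  have c: "c > 0"
    unfolding c_def using x0 e(1) edge_vertex_less by (intro prod_pos) (force simp: T_def)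
  have F: "F > 0" unfolding F_def by (rule edge_poly_maximizer_pos[OF x])
  define \<epsilon> where "\<epsilon> = min 1 (c / (2 * real k * F))"
  have \<epsilon>: "0 < \<epsilon>" "\<epsilon> \<le> 1" "\<epsilon> \<le> c / (2 * real k * F)"
    unfolding \<epsilon>_def using c F k by auto
  define y where "y = (\<lambda>j. if j \<in> T then \<epsilon> else x j)"
  have xy: "0 \<le> x j \<and> x j \<le> y j" if "j < n" for j
    using x0 that \<epsilon> unfolding y_def T_def by auto
  have "\<epsilon> ^ k * c = (\<Prod>j\<in>e. y j) - (\<Prod>j\<in>e. x j)"
    unfolding y_def k_def c_def using T(1,3) finite_edge[OF e(1)]
    by (intro edge_prod_raise_zeros[symmetric]) (auto simp: T_def)
  also have "\<dots> \<le> edge_poly E y - F"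
    unfolding F_def using xy e(1) by (rule edge_prod_increase_le)
  also have "edge_poly E y \<le> F * power_sum n m y"
    using max xy unfolding F_def by (meson order_trans)
  also have "power_sum n m y = 1 + real k * \<epsilon> ^ m"
    unfolding y_def k_def N[symmetric] using T(1) edge_subset[OF e(1)]
    by (intro power_sum_raise) (auto simp: T_def)
  finally have "\<epsilon> ^ k * c \<le> \<epsilon> ^ k * (F * real k * \<epsilon> ^ (m - k))"
    using k by (simp add: algebra_simps flip: power_add)
  then have "c \<le> F * real k * \<epsilon> ^ (m - k)" using \<epsilon> by simp
  also have "\<dots> \<le> F * real k * \<epsilon>"
    using F k \<epsilon> power_decreasing[of 1 "m - k" \<epsilon>] by (intro mult_left_mono) auto
  also have "\<dots> \<le> c / 2"
    using F k \<epsilon>(3) by (simp add: field_simps)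
  finally show False using c by simp
qed

lemma edge_poly_maximizer_positive:
  assumes x: "edge_poly_maximizer x" and i: "i < n"
  shows "x i > 0"
proof -
  have x0: "\<forall>i<n. 0 \<le> x i" and N: "power_sum n m x = 1"
    using x unfolding edge_poly_maximizer_def by auto
  have "\<exists>a<n. x a \<noteq> 0"
  proof (rule ccontr)
    assume "\<not> ?thesis"
    then have "power_sum n m x = 0" unfolding power_sum_def using two_le_card_edge by simp
    with N show False by simp
  qed
  then obtain a where "a < n" "x a > 0" using x0 by force
  then show ?thesis
    by (rule edge_path_induct[where P = "\<lambda>j. x j > 0", OF _ i])
      (use edge_poly_maximizer_edge_pos[OF x] in blast)
qed

text \<open>First-order condition of the constrained maximum in the \<open>i\<close>-th coordinate.\<close>
lemma edge_poly_maximizer_eigen: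
  assumes x: "edge_poly_maximizer x" and i: "i < n"
  shows "adj_apply E x i = real m * edge_poly E x * x i ^ (m - 1)"
proof -
  define S where "S = adj_apply E x i"
  define F where "F = edge_poly E x"
  define g where "g = (\<lambda>t. F + t * S - F * (1 - x i ^ m + (x i + t) ^ m))"
  have x0: "\<forall>j<n. 0 \<le> x j" and N: "power_sum n m x = 1"
    and max: "\<forall>y. (\<forall>i<n. 0 \<le> y i) \<longrightarrow> edge_poly E y \<le> edge_poly E x * power_sum n m y"
    using x unfolding edge_poly_maximizer_def by auto
  have "(g has_real_derivative (S - F * (real m * (x i + 0) ^ (m - 1)))) (at 0)"
    unfolding g_def by (auto intro!: derivative_eq_intros)
  moreover have "0 < x i" by (rule edge_poly_maximizer_positive[OF x i])
  moreover have "g t \<le> g 0" if t: "\<bar>0 - t\<bar> < x i" for t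
  proof -
    have "\<forall>j<n. 0 \<le> (x(i := x i + t)) j" using x0 t by auto
    then have "edge_poly E (x(i := x i + t)) \<le> F * power_sum n m (x(i := x i + t))"
      using max unfolding F_def by blast
    then show ?thesis
      unfolding g_def edge_poly_update power_sum_update[OF i] N S_def F_def by simp
  qed
  ultimately have "S - F * (real m * (x i + 0) ^ (m - 1)) = 0" by (intro DERIV_local_max) auto
  then show ?thesis unfolding S_def F_def by simp
qed

lemma positive_eigenpair_exists:
  "\<exists>(v :: nat \<Rightarrow> real) r. (\<forall>i<n. v i > 0) \<and> v 0 = 1 \<and> r > 0 \<and> (\<forall>i<n. adj_apply E v i = r * v i ^ (m - 1))"
proof -
  obtain x where x: "edge_poly_maximizer x" using edge_poly_maximizer_exists by blast
  have pos: "\<forall>i<n. x i > 0" using edge_poly_maximizer_positive[OF x] by blast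
  define v where "v = (\<lambda>j. (1 / x 0) * x j)"
  define r where "r = real m * edge_poly E x"
  have eigen: "adj_apply E v i = r * v i ^ (m - 1)" if "i < n" for i
    unfolding v_def adj_apply_scale edge_poly_maximizer_eigen[OF x that] r_def
    by (simp add: power_divide)
  show ?thesis
  proof (rule exI[of _ v], rule exI[of _ r], intro conjI)
    show "\<forall>i<n. v i > 0" "v 0 = 1" unfolding v_def using pos n_pos by auto
    show "r > 0" unfolding r_def using edge_poly_maximizer_pos[OF x] two_le_card_edge by simp
    show "\<forall>i<n. adj_apply E v i = r * v i ^ (m - 1)" using eigen by blast
  qed
qed

end

section \<open>Eigenvectors of the spectral radius\<close>

locale positive_eigenpair = connected_uniform_hypergraph +
  fixes v :: "nat \<Rightarrow> real" and r :: real
  assumes v_pos: "\<forall>i<n. v i > 0" and v_0: "v 0 = 1" and r_pos: "r > 0"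
    and eigen: "\<forall>i<n. adj_apply E v i = r * v i ^ (m - 1)"
begin

lemma adj_apply_scaled_v: "i < n \<Longrightarrow> adj_apply E (\<lambda>j. t * v j) i = r * (t * v i) ^ (m - 1)"
  using eigen by (simp add: adj_apply_scale power_mult_distrib)

lemma obtain_max_ratio:
  assumes "\<exists>i<n. y i \<noteq> 0"
  obtains t i0 where "t > 0" "i0 < n" "cmod (y i0) = t * v i0" "\<forall>j<n. cmod (y j) \<le> t * v j"
proof -
  define q where "q = (\<lambda>j. cmod (y j) / v j)"
  define t where "t = Max (q ` {..<n})"
  obtain i0 where i0: "i0 < n" "q i0 = t"
    using Max_in[of "q ` {..<n}"] n_pos unfolding t_def by fastforce
  have le: "\<forall>j<n. q j \<le> t" unfolding t_def by auto
  obtain j where "j < n" "y j \<noteq> 0" using assms by auto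
  with v_pos le have "t > 0" unfolding q_def by (meson divide_pos_pos order_less_le_trans zero_less_norm_iff)
  moreover have "cmod (y i0) = t * v i0" using i0 v_pos unfolding q_def by (auto simp: field_simps)
  moreover have "\<forall>j<n. cmod (y j) \<le> t * v j"
    using le v_pos unfolding q_def by (auto simp: divide_le_eq mult.commute)
  ultimately show ?thesis using that i0(1) by blast
qed

lemma norm_eigenvalue_le:
  assumes "eigenpair m n (adj_tensor m E) lam y"
  shows "cmod lam \<le> r"
proof -
  have nz: "\<exists>i<n. y i \<noteq> 0" and eq: "\<forall>i<n. adj_apply E y i = lam * y i ^ (m - 1)"
    using assms unfolding eigenpair_adj_tensor_iff by auto
  obtain t i0 where t: "t > 0" "i0 < n" "cmod (y i0) = t * v i0" "\<forall>j<n. cmod (y j) \<le> t * v j"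
    using obtain_max_ratio[OF nz] by blast
  have "cmod lam * (t * v i0) ^ (m - 1) = cmod (adj_apply E y i0)"
    using eq t(2,3) by (simp add: norm_mult norm_power)
  also have "\<dots> \<le> adj_apply E (\<lambda>j. cmod (y j)) i0" by (rule norm_adj_apply_le)
  also have "\<dots> \<le> adj_apply E (\<lambda>j. t * v j) i0" using t(4) by (intro adj_apply_mono) auto
  also have "\<dots> = r * (t * v i0) ^ (m - 1)" by (rule adj_apply_scaled_v[OF t(2)])
  finally show ?thesis using t v_pos by simp
qed

definition diag_perron :: "(nat \<Rightarrow> complex) \<Rightarrow> nat \<Rightarrow> complex" where
  "diag_perron d = (\<lambda>i\<in>{..<n}. d i * complex_of_real (v i))"

lemma adj_apply_diag_perron:
  assumes d: "d \<in> stabilizers n m E" and i: "i < n"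
  shows "adj_apply E (diag_perron d) i = complex_of_real r * diag_perron d i ^ (m - 1)"
proof -
  have "adj_apply E (diag_perron d) i = adj_apply E (\<lambda>j. d j * complex_of_real (v j)) i"
    by (rule adj_apply_cong) (simp add: diag_perron_def)
  also have "\<dots> = (\<Sum>e\<in>{e\<in>E. i \<in> e}. d i ^ (m - 1) * (\<Prod>j\<in>e - {i}. complex_of_real (v j)))"
    using d unfolding adj_apply_def stabilizers_def diag_stabilizes_def
    by (intro sum.cong refl) (auto simp: prod.distrib)
  also have "\<dots> = d i ^ (m - 1) * complex_of_real (adj_apply E v i)"
    by (simp add: adj_apply_def sum_distrib_left)
  also have "\<dots> = complex_of_real r * diag_perron d i ^ (m - 1)"
    using eigen i by (simp add: diag_perron_def power_mult_distrib)
  finally show ?thesis .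
qed

lemma diag_perron_one: "diag_perron (pointwise_one {..<n}) = (\<lambda>i\<in>{..<n}. complex_of_real (v i))"
  unfolding diag_perron_def pointwise_one_def by auto

lemma eigenpair_perron: "eigenpair m n (adj_tensor m E) (complex_of_real r) (\<lambda>i\<in>{..<n}. complex_of_real (v i))"
  unfolding eigenpair_adj_tensor_iff diag_perron_one[symmetric]
  using adj_apply_diag_perron[OF pointwise_one_stabilizer] n_pos v_0
  by (auto simp: diag_perron_def pointwise_one_def intro!: exI[of _ 0])

lemma tensor_spectral_radius_eq: "tensor_spectral_radius m n (adj_tensor m E) = r"
  unfolding tensor_spectral_radius_def
proof (rule cSup_eq_maximum)
  show "r \<in> {cmod lam |lam. \<exists>x. eigenpair m n (adj_tensor m E) lam x}"
    using eigenpair_perron r_pos by force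
qed (use norm_eigenvalue_le in blast)

lemma diag_perron_in_rho_eigvecs:
  assumes d: "d \<in> stabilizers n m E"
  shows "diag_perron d \<in> rho_eigvecs m n (adj_tensor m E)"
  unfolding rho_eigvecs_def tensor_spectral_radius_eq eigenpair_adj_tensor_iff
  using d adj_apply_diag_perron[OF d] n_pos v_0
  by (auto simp: diag_perron_def stabilizers_def intro!: exI[of _ 0])

lemma rho_eigvecsD:
  assumes "y \<in> rho_eigvecs m n (adj_tensor m E)"
  shows "y \<in> extensional {..<n}" "y 0 = 1" "\<forall>i<n. adj_apply E y i = complex_of_real r * y i ^ (m - 1)"
  using assms unfolding rho_eigvecs_def tensor_spectral_radius_eq eigenpair_adj_tensor_iff by auto

text \<open>Equality must hold throughout \<open>r (t v\<^sub>x)\<^sup>m\<^sup>-\<^sup>1 = |(A y)\<^sub>x| \<le> (A|y|)\<^sub>x \<le> (A (t v))\<^sub>x = r (t v\<^sub>x)\<^sup>m\<^sup>-\<^sup>1\<close>,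
  so \<open>|y| = t v\<close> spreads from \<open>x\<close> to every edge through \<open>x\<close>.\<close>
lemma norm_eigvec_edge_step:
  assumes eq: "\<forall>i<n. adj_apply E y i = complex_of_real r * y i ^ (m - 1)"
    and t: "t > 0" "\<forall>j<n. cmod (y j) \<le> t * v j"
    and e: "e \<in> E" "x \<in> e" "z \<in> e" and x: "cmod (y x) = t * v x"
  shows "cmod (y z) = t * v z"
proof (cases "z = x")
  case False
  have xn: "x < n" using edge_vertex_less[OF e(1,2)] .
  have bound: "\<And>j. j < n \<Longrightarrow> 0 \<le> cmod (y j) \<and> cmod (y j) \<le> t * v j" using t(2) by simp
  have "r * (t * v x) ^ (m - 1) = cmod (adj_apply E y x)"
    using eq xn x r_pos by (simp add: norm_mult norm_power)
  also have "\<dots> \<le> adj_apply E (\<lambda>j. cmod (y j)) x" by (rule norm_adj_apply_le)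
  finally have "adj_apply E (\<lambda>j. t * v j) x \<le> adj_apply E (\<lambda>j. cmod (y j)) x"
    unfolding adj_apply_scaled_v[OF xn] .
  moreover have "adj_apply E (\<lambda>j. cmod (y j)) x \<le> adj_apply E (\<lambda>j. t * v j) x"
    by (rule adj_apply_mono[OF bound])
  ultimately have "adj_apply E (\<lambda>j. cmod (y j)) x = adj_apply E (\<lambda>j. t * v j) x" by linarith
  with bound e(1,2) have eq: "(\<Prod>j\<in>e - {x}. cmod (y j)) = (\<Prod>j\<in>e - {x}. t * v j)"
    by (intro adj_apply_eq_imp_edge_prod_eq)
  have ab: "\<forall>j\<in>e - {x}. 0 \<le> cmod (y j) \<and> cmod (y j) \<le> t * v j \<and> 0 < t * v j"
    using bound v_pos t(1) edge_vertex_less[OF e(1)] by simp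
  have "z \<in> e - {x}" using False e(3) by blast
  from prod_le_eq_imp_eq[OF finite_Diff[OF finite_edge[OF e(1)]] ab eq this] show ?thesis .
qed (use x in simp)

lemma norm_rho_eigvec:
  assumes y: "y \<in> rho_eigvecs m n (adj_tensor m E)" and i: "i < n"
  shows "cmod (y i) = v i"
proof -
  note y = rho_eigvecsD[OF y]
  then have "\<exists>i<n. y i \<noteq> 0" using n_pos by auto
  then obtain t i0 where t: "t > 0" "i0 < n" "cmod (y i0) = t * v i0" "\<forall>j<n. cmod (y j) \<le> t * v j"
    by (rule obtain_max_ratio)
  have "\<forall>i<n. cmod (y i) = t * v i"
    using edge_path_induct[where P = "\<lambda>x. cmod (y x) = t * v x", OF t(2) _ t(3)]
      norm_eigvec_edge_step[OF y(3) t(1,4)] by blast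
  moreover from this have "t = 1" using n_pos y(2) v_0 by (metis mult.right_neutral norm_one)
  ultimately show ?thesis using i by simp
qed

text \<open>Since \<open>|y| = v\<close>, the moduli in \<open>r y\<^sub>i\<^sup>m\<^sup>-\<^sup>1 = \<Sum>\<^sub>e\<^sub>\<ni>\<^sub>i \<Prod>\<^sub>j\<^sub>\<in>\<^sub>e\<^sub>-\<^sub>i y\<^sub>j\<close> add up, so every summand has
  the argument of the left-hand side.\<close>
lemma rho_eigvec_edge_aligned:
  assumes y: "y \<in> rho_eigvecs m n (adj_tensor m E)" and e: "e \<in> E" "i \<in> e"
  shows "(\<Prod>j\<in>e - {i}. y j) * cnj (y i) ^ (m - 1) =
    complex_of_real ((\<Prod>j\<in>e - {i}. v j) * v i ^ (m - 1))"
proof -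
  have i: "i < n" using edge_vertex_less[OF e] .
  define z where "z = (\<lambda>e'. \<Prod>j\<in>e' - {i}. y j)"
  define w where "w = complex_of_real r * y i ^ (m - 1)"
  have norm_z: "cmod (z e') = (\<Prod>j\<in>e' - {i}. v j)" if "e' \<in> E" for e'
    unfolding z_def prod_norm[symmetric] using norm_rho_eigvec[OF y] edge_vertex_less[OF that]
    by (intro prod.cong) auto
  have w: "w = (\<Sum>e'\<in>{e\<in>E. i \<in> e}. z e')"
    unfolding w_def z_def using rho_eigvecsD(3)[OF y] i by (simp add: adj_apply_def)
  have norm_w: "cmod w = r * v i ^ (m - 1)"
    unfolding w_def using norm_rho_eigvec[OF y i] r_pos by (simp add: norm_mult norm_power)
  also have "\<dots> = (\<Sum>e'\<in>{e\<in>E. i \<in> e}. cmod (z e'))"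
    using eigen i norm_z by (simp add: adj_apply_def)
  finally have "z e * cnj w = complex_of_real (cmod (z e) * cmod w)"
    using sum_norm_eq_imp_aligned[OF _ w] finite_edges e by simp
  then have "complex_of_real r * (z e * cnj (y i) ^ (m - 1)) =
      complex_of_real r * complex_of_real ((\<Prod>j\<in>e - {i}. v j) * v i ^ (m - 1))"
    unfolding norm_z[OF e(1)] norm_w by (simp add: w_def ac_simps)
  then show ?thesis unfolding z_def using r_pos by simp
qed

lemma rho_eigvec_phase_stabilizer:
  assumes y: "y \<in> rho_eigvecs m n (adj_tensor m E)"
  shows "(\<lambda>i\<in>{..<n}. y i / complex_of_real (v i)) \<in> stabilizers n m E"
proof -
  define d where "d = (\<lambda>i\<in>{..<n}. y i / complex_of_real (v i))"
  have norm_d: "cmod (d i) = 1" if "i < n" for i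
    using that norm_rho_eigvec[OF y that] v_pos[rule_format, OF that] unfolding d_def by (simp add: norm_divide)
  have "d i ^ (m - 1) = (\<Prod>j\<in>e - {i}. d j)" if e: "e \<in> E" "i \<in> e" for e i
  proof (rule unit_power_eq_if_mult_cnj_power_eq_1[OF norm_d[OF edge_vertex_less[OF e]]])
    define P where "P = (\<Prod>j\<in>e - {i}. v j) * v i ^ (m - 1)"
    have "P > 0"
      unfolding P_def using v_pos edge_vertex_less[OF e(1)] e(2) by (intro mult_pos_pos prod_pos) auto
    have "(\<Prod>j\<in>e - {i}. d j) = (\<Prod>j\<in>e - {i}. y j / complex_of_real (v j))"
      unfolding d_def using edge_vertex_less[OF e(1)] by (intro prod.cong) auto
    then have "(\<Prod>j\<in>e - {i}. d j) * cnj (d i) ^ (m - 1) =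
        (\<Prod>j\<in>e - {i}. y j) * cnj (y i) ^ (m - 1) / complex_of_real P"
      unfolding d_def P_def using edge_vertex_less[OF e] by (simp add: prod_dividef power_divide)
    also have "\<dots> = 1" unfolding rho_eigvec_edge_aligned[OF y e] P_def[symmetric] using \<open>P > 0\<close> by simp
    finally show "(\<Prod>j\<in>e - {i}. d j) * cnj (d i) ^ (m - 1) = 1" .
  qed
  moreover have "d 0 = 1" unfolding d_def using rho_eigvecsD(2)[OF y] v_0 n_pos by simp
  moreover have "\<forall>i<n. d i \<noteq> 0" using norm_d by fastforce
  ultimately show ?thesis unfolding stabilizers_def diag_stabilizes_def d_def by simp
qed

lemma rho_eigvecs_eq: "rho_eigvecs m n (adj_tensor m E) = diag_perron ` stabilizers n m E"
proof (intro equalityI subsetI)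
  fix y assume y: "y \<in> rho_eigvecs m n (adj_tensor m E)"
  have "y = diag_perron (\<lambda>i\<in>{..<n}. y i / complex_of_real (v i))"
    using rho_eigvecsD(1)[OF y] v_pos unfolding diag_perron_def
    by (intro extensionalityI[of _ "{..<n}"]) auto
  with rho_eigvec_phase_stabilizer[OF y] show "y \<in> diag_perron ` stabilizers n m E" by blast
qed (use diag_perron_in_rho_eigvecs in blast)

lemma sgn_diag_perron:
  assumes d: "d \<in> stabilizers n m E" and i: "i < n"
  shows "sgn (diag_perron d i) = d i"
proof -
  have "diag_perron d i = d i * complex_of_real (v i)" and "v i > 0"
    using i v_pos unfolding diag_perron_def by auto
  with norm_stabilizer[OF d i] show ?thesis by (simp add: sgn_div_norm norm_mult scaleR_conv_of_real)
qed

lemma diag_perron_inj: "inj_on diag_perron (stabilizers n m E)"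
proof (rule inj_onI)
  fix d d' assume d: "d \<in> stabilizers n m E" "d' \<in> stabilizers n m E" and "diag_perron d = diag_perron d'"
  then have "\<forall>i<n. d i = d' i" using sgn_diag_perron by metis
  with d show "d = d'" unfolding stabilizers_def by (intro extensionalityI) auto
qed

lemma perron_vec_eq: "perron_vec m n (adj_tensor m E) = diag_perron (pointwise_one {..<n})"
  unfolding perron_vec_def
proof (rule the_equality)
  show "diag_perron (pointwise_one {..<n}) \<in> rho_eigvecs m n (adj_tensor m E) \<and>
      (\<forall>i<n. Im (diag_perron (pointwise_one {..<n}) i) = 0 \<and> Re (diag_perron (pointwise_one {..<n}) i) > 0)"
    using diag_perron_in_rho_eigvecs[OF pointwise_one_stabilizer] v_pos diag_perron_one by simp
  fix y assume y: "y \<in> rho_eigvecs m n (adj_tensor m E) \<and> (\<forall>i<n. Im (y i) = 0 \<and> Re (y i) > 0)"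
  then obtain d where d: "d \<in> stabilizers n m E" and yd: "y = diag_perron d"
    using rho_eigvecs_eq by blast
  have "d i = 1" if "i < n" for i
  proof -
    define a where "a = Re (y i)"
    have "y i = complex_of_real a" "a > 0" unfolding a_def using y that by (auto simp: complex_eq_iff)
    then have "sgn (y i) = 1" by (simp add: sgn_of_real)
    then show ?thesis using sgn_diag_perron[OF d that] yd by simp
  qed
  then have "d = pointwise_one {..<n}"
    using d unfolding stabilizers_def pointwise_one_def by (intro extensionalityI[of _ "{..<n}"]) auto
  with yd show "y = diag_perron (pointwise_one {..<n})" by simp
qed

lemma eig_op_diag_perron:
  assumes d: "d \<in> stabilizers n m E" and d': "d' \<in> stabilizers n m E"
  shows "eig_op m n (adj_tensor m E) (diag_perron d) (diag_perron d') = diag_perron (pointwise_mult {..<n} d d')"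
  unfolding eig_op_def perron_vec_eq
  using sgn_diag_perron[OF d] sgn_diag_perron[OF d']
  by (auto simp: diag_perron_def pointwise_mult_def pointwise_one_def fun_eq_iff)

lemma stabilizing_dimension_le:
  "stabilizing_dimension m n (adj_tensor m E) \<le> size (prime_factorization (card (stabilizers n m E)))"
proof -
  define Y where "Y = diag_perron ` stabilizers n m E"
  define one where "one = diag_perron (pointwise_one {..<n})"
  define op where "op = eig_op m n (adj_tensor m E)"
  define phase where "phase = (\<lambda>y::nat \<Rightarrow> complex. \<lambda>i\<in>{..<n}. sgn (y i))"
  have phase: "phase (diag_perron d) = d" if "d \<in> stabilizers n m E" for d
    using that sgn_diag_perron[OF that] unfolding phase_def stabilizers_def
    by (intro extensionalityI[of _ "{..<n}"]) auto
  have op: "op (diag_perron d) (diag_perron d') = diag_perron (pointwise_mult {..<n} d d')"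
    if "d \<in> stabilizers n m E" "d' \<in> stabilizers n m E" for d d'
    unfolding op_def by (rule eig_op_diag_perron[OF that])
  have "pointwise_mult {..<n} (pointwise_one {..<n}) (pointwise_one {..<n}) =
      (pointwise_one {..<n} :: nat \<Rightarrow> complex)"
    unfolding pointwise_mult_def pointwise_one_def by auto
  then have "op one one = one"
    unfolding one_def using op[OF pointwise_one_stabilizer pointwise_one_stabilizer] by simp
  moreover have "phase ` Y = stabilizers n m E" unfolding Y_def image_image using phase by simp
  ultimately have "zm_composition_length m Y op one \<le> size (prime_factorization (card Y))"
    using pointwise_one_stabilizer pointwise_mult_stabilizer finite_stabilizers two_le_card_edge
      root_of_unity_group_stabilizers phase op
    unfolding Y_def one_def
    by (intro zm_composition_length_le_by_hom[where \<phi> = phase and I = "{..<n}"]) (auto intro!: inj_onI)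
  then show ?thesis
    unfolding stabilizing_dimension_def perron_vec_eq rho_eigvecs_eq
      card_image[OF diag_perron_inj, symmetric] Y_def one_def op_def .
qed

end

theorem corollary4p14:
  fixes n m :: nat and E :: "nat set set"
  assumes "hg_uniform n m E"
    and "hg_connected n E"
    and "card E > 1"
  shows "stabilizing_index m n (adj_tensor m E) \<le> m ^ (n - matching_number E - 2) \<and>
         stabilizing_dimension m n (adj_tensor m E) \<le> (n - matching_number E - 2) * cl m"
proof -
  interpret connected_uniform_hypergraph n m E by unfold_locales (fact assms)+
  obtain v :: "nat \<Rightarrow> real" and r :: real
    where "\<forall>i<n. v i > 0" "v 0 = 1" "r > 0" "\<forall>i<n. adj_apply E v i = r * v i ^ (m - 1)"
    using positive_eigenpair_exists by blast
  then interpret positive_eigenpair n m E v r by unfold_locales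
  let ?k = "n - matching_number E - 2"
  have dvd: "card (stabilizers n m E) dvd m ^ ?k" by (rule card_stabilizers_dvd)
  have m: "m \<noteq> 0" using two_le_card_edge by simp
  have "stabilizing_index m n (adj_tensor m E) \<le> m ^ ?k"
    unfolding stabilizing_index_adj_tensor[OF uniform] using dvd m by (simp add: dvd_imp_le)
  moreover have "stabilizing_dimension m n (adj_tensor m E) \<le> size (prime_factorization (m ^ ?k))"
    using stabilizing_dimension_le size_prime_factorization_mono[OF dvd power_not_zero[OF m]]
    by (rule order_trans)
  ultimately show ?thesis unfolding cl_def size_prime_factorization_power[OF m] by simp
qed

end
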